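(* Consider the stacked dataset and the regression $$\Delta Y_{i,t,g}=\lambda_{s,t,g}+\eta_{q,t,g}+\sum_{e\in\{-L,\dots,K\}\setminus\{-1\}}\tau_e\,\mathbb 1\{S_i=g,Q_i=1,t=g+e\}+\varepsilon_{i,t,g},$$ where $\lambda_{s,t,g}$ is a fixed effect for each (group $s\in\{g,g_c(g)\}$, period $t$, stack $g$) and $\eta_{q,t,g}$ for each (eligibility $q\in\{0,1\}$, period $t$, stack $g$). Assume every cell count in every stack is positive. Then for each $e\neq-1$ the OLS coefficient satisfies, with $\mathcal G_{\mathrm{trg}}(e)=\{g\in\mathcal G_{\mathrm{trg}}:1\le g+e\le T\}$, $$\hat\tau_e=\sum_{g\in\mathcal G_{\mathrm{trg}}(e)}w^{\mathrm{FWL}}_g(e)\,\hat\tau^{\mathrm{sat}}_{g,g+e},\qquad w^{\mathrm{FWL}}_g(e)=\frac{V_{g}}{\sum_{g'\in\mathcal G_{\mathrm{trg}}(e)}V_{g'}},\quad V_g=\Big(\tfrac1{n^{(g)}_{g,1}}+\tfrac1{n^{(g)}_{g,0}}+\tfrac1{n^{(g)}_{g_c(g),1}}+\tfrac1{n^{(g)}_{g_c(g),0}}\Big)^{-1},$$ so $w^{\mathrm{FWL}}_g(e)>0$ and $\sum_gw^{\mathrm{FWL}}_g(e)=1$. Moreover, under i.i.d. sampling, overlap, no anticipation, DDD-PCT, admissibility and non-vanishing shares, $w^{\mathrm{FWL}}_g(e)\xrightarrow{p}w^*_g(e)$ for constants $w^*_g(e)>0$ summing to one, and $\hat\tau_e\xrightarrow{p}\sum_{g\in\mathcal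 G_{\mathrm{trg}}(e)}w^*_g(e)\,\mathrm{CATT}(g,e)$; in particular no $\mathrm{CATT}(g,e')$ with $e'\ne e$ enters the limit.
   Context: Setup: $n$ units observed over $t\in\{1,\dots,T\}$ ($T$ fixed, number of cohorts fixed, $n\to\infty$); treatment-enabling group $S_i\in\mathcal S\subseteq\{2,\dots,T\}\cup\{\infty\}$; time-invariant eligibility $Q_i\in\{0,1\}$; $\mathcal G_{\mathrm{trg}}=\mathcal S\setminus\{\infty\}$. Potential outcomes $Y_{i,t}(g)$, $Y_{i,t}(\infty)$ with $Y_{i,t}(g)=Y_{i,t}(\infty)$ for $t<g$; observed $Y_{i,t}=Y_{i,t}(g)$ if $S_i=g\in\mathcal G_{\mathrm{trg}}$, $Q_i=1$, else $Y_{i,t}(\infty)$. $\mathrm{CATT}(g,e)=\mathbb E[Y_{i,g+e}(g)-Y_{i,g+e}(\infty)\mid S_i=g,Q_i=1]$. Stacks: window lengths $L\ge1$, $K\ge0$; for each $g\in\mathcal G_{\mathrm{trg}}$ a comparison group $g_c(g)\in\mathcal S$ with $g_c(g)>g+K$; stack $\mathbb S_g$ contains units with $S_i\in\{g,g_c(g)\}$ over periods $\{g-L,\dots,g+K\}$, with four cells $(S_i,Q_i)\in\{(g,1),(g,0),(g_c(g),1),(g_c(g),0)\}$ of counts $n^{(g)}_{s,q}$. The stacked dataset has one observation $(i,t,g)$ per stack $g$, unit $i\in\mathbb S_g$, period $t$ in the window (a unit may appear in several stacks), with outcome $\Delta Y_{i,t,g}=Y_{i,t}-Y_{i,g-1}$.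 $\hat\tau^{\mathrm{sat}}_{g,t}=(\overline{\Delta Y}_{g,1,t}-\overline{\Delta Y}_{g,0,t})-(\overline{\Delta Y}_{g_c,1,t}-\overline{\Delta Y}_{g_c,0,t})$ computed within $\mathbb S_g$ with cell means of $\Delta Y_{i,t,g}$. Assumptions: i.i.d. sampling with finite second moments; overlap $\mathbb P(S_i=s,Q_i=q)>0$; no anticipation ($Y_{i,t}(g)=Y_{i,t}(\infty)$ a.s. for $t<g$); DDD-PCT: for all $g\in\mathcal G_{\mathrm{trg}}$, $g_c\in\mathcal S$, $g_c>g$, $t\in\{2,\dots,T\}$, $t\le g_c$: $\Delta_t(g,1)-\Delta_t(g,0)=\Delta_t(g_c,1)-\Delta_t(g_c,0)$ with $\Delta_t(s,q)=\mathbb E[Y_{i,t}(\infty)-Y_{i,t-1}(\infty)\mid S_i=s,Q_i=q]$; admissibility: each stack cell has positive probability; non-vanishing shares: $n_g/n$ and within-stack shares $n^{(g)}_{s,q}/n_g$ converge in probability to strictly positive limits, where $n_g=\sum_{s,q}n^{(g)}_{s,q}$. *)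

theory Defs
  imports "HOL-Probability.Probability" "HOL-Library.Extended_Nat"
begin

(* Groups are encoded as enat: enat g for cohort g, \<infinity> for never-enabled. *)

definition Gtrg :: "enat set \<Rightarrow> nat set" where
  "Gtrg SS = {g. enat g \<in> SS}"

definition Gtrg_e :: "nat \<Rightarrow> enat set \<Rightarrow> int \<Rightarrow> nat set" where
  "Gtrg_e T SS e = {g \<in> Gtrg SS. 1 \<le> int g + e \<and> int g + e \<le> int T}"

definition window :: "nat \<Rightarrow> nat \<Rightarrow> nat \<Rightarrow> nat \<Rightarrow> nat set" where
  "window T L K g = {t. 1 \<le> t \<and> t \<le> T \<and> int g - int L \<le> int t \<and> t \<le> g + K}"

definition event_times :: "nat \<Rightarrow> nat \<Rightarrow> int set" where
  "event_times L K = {- int L .. int K} - {-1}"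

definition stack_obs ::
  "nat \<Rightarrow> nat \<Rightarrow> nat \<Rightarrow> enat set \<Rightarrow> (nat \<Rightarrow> enat) \<Rightarrow> nat \<Rightarrow> (nat \<Rightarrow> enat) \<Rightarrow> (nat \<times> nat \<times> nat) set" where
  "stack_obs T L K SS gc n S =
     {(i,t,g). g \<in> Gtrg SS \<and> i < n \<and> (S i = enat g \<or> S i = gc g) \<and> t \<in> window T L K g}"

definition dY :: "(nat \<Rightarrow> nat \<Rightarrow> real) \<Rightarrow> nat \<Rightarrow> nat \<Rightarrow> nat \<Rightarrow> real" where
  "dY Y i t g = Y i t - Y i (g - 1)"

definition ssr ::
  "nat \<Rightarrow> nat \<Rightarrow> nat \<Rightarrow> enat set \<Rightarrow> (nat \<Rightarrow> enat) \<Rightarrow>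
   nat \<Rightarrow> (nat \<Rightarrow> enat) \<Rightarrow> (nat \<Rightarrow> bool) \<Rightarrow> (nat \<Rightarrow> nat \<Rightarrow> real) \<Rightarrow>
   (enat \<Rightarrow> nat \<Rightarrow> nat \<Rightarrow> real) \<times> (bool \<Rightarrow> nat \<Rightarrow> nat \<Rightarrow> real) \<times> (int \<Rightarrow> real) \<Rightarrow> real" where
  "ssr T L K SS gc n S Q Y p =
     (case p of (lam, eta, tau) \<Rightarrow>
       (\<Sum>(i,t,g)\<in>stack_obs T L K SS gc n S.
          (dY Y i t g - lam (S i) t g - eta (Q i) t g
           - (\<Sum>e\<in>event_times L K.
                tau e * (if S i = enat g \<and> Q i \<and> int t = int g + e then 1 else 0)))\<^sup>2))"

definition is_ols where
  "is_ols T L K SS gc n S Q Y p \<longleftrightarrow>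
     (\<forall>p'. ssr T L K SS gc n S Q Y p \<le> ssr T L K SS gc n S Q Y p')"

definition ols_tau where
  "ols_tau T L K SS gc n S Q Y e =
     (case (SOME p. is_ols T L K SS gc n S Q Y p) of (lam, eta, tau) \<Rightarrow> tau e)"

definition cell_n :: "nat \<Rightarrow> (nat \<Rightarrow> enat) \<Rightarrow> (nat \<Rightarrow> bool) \<Rightarrow> enat \<Rightarrow> bool \<Rightarrow> nat" where
  "cell_n n S Q s q = card {i. i < n \<and> S i = s \<and> Q i = q}"

definition stack_n :: "(nat \<Rightarrow> enat) \<Rightarrow> nat \<Rightarrow> (nat \<Rightarrow> enat) \<Rightarrow> (nat \<Rightarrow> bool) \<Rightarrow> nat \<Rightarrow> nat" where
  "stack_n gc n S Q g =
     cell_n n S Q (enat g) True + cell_n n S Q (enat g) False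
     + cell_n n S Q (gc g) True + cell_n n S Q (gc g) False"

definition cell_mean where
  "cell_mean n S Q Y g s q t =
     (\<Sum>i\<in>{i. i < n \<and> S i = s \<and> Q i = q}. dY Y i t g) / real (cell_n n S Q s q)"

definition tau_sat where
  "tau_sat gc n S Q Y g t =
     (cell_mean n S Q Y g (enat g) True t - cell_mean n S Q Y g (enat g) False t)
     - (cell_mean n S Q Y g (gc g) True t - cell_mean n S Q Y g (gc g) False t)"

definition V_stack where
  "V_stack gc n S Q g =
     inverse (1 / real (cell_n n S Q (enat g) True) + 1 / real (cell_n n S Q (enat g) False)
            + 1 / real (cell_n n S Q (gc g) True) + 1 / real (cell_n n S Q (gc g) False))"

definition w_fwl where
  "w_fwl T SS gc n S Q e g =
     V_stack gc n S Q g / (\<Sum>g'\<in>Gtrg_e T SS e. V_stack gc n S Q g')"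

(* convergence in (outer) probability of a sequence of (possibly non-measurable) maps *)
definition conv_prob :: "'a measure \<Rightarrow> (nat \<Rightarrow> 'a \<Rightarrow> real) \<Rightarrow> real \<Rightarrow> bool" where
  "conv_prob M X c \<longleftrightarrow>
     (\<forall>\<epsilon>>0. \<exists>A. (\<forall>n. A n \<in> sets M \<and> {\<omega>\<in>space M. \<epsilon> < \<bar>X n \<omega> - c\<bar>} \<subseteq> A n)
               \<and> (\<lambda>n. measure M (A n)) \<longlonglongrightarrow> 0)"

definition Yobs :: "enat set \<Rightarrow> enat \<Rightarrow> bool \<Rightarrow> (enat \<Rightarrow> nat \<Rightarrow> real) \<Rightarrow> nat \<Rightarrow> real" where
  "Yobs SS s q Y t = (if s \<noteq> \<infinity> \<and> s \<in> SS \<and> q then Y s t else Y \<infinity> t)"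

(* measurable space of one unit's data (S_i, Q_i, (Y_{i,t}(g))_{g,t}) *)
definition unit_space :: "nat \<Rightarrow> enat set \<Rightarrow> (enat \<times> bool \<times> (enat \<times> nat \<Rightarrow> real)) measure" where
  "unit_space T SS = count_space UNIV \<Otimes>\<^sub>M count_space UNIV \<Otimes>\<^sub>M
                      PiM (insert \<infinity> SS \<times> {1..T}) (\<lambda>_. borel)"

definition unit_rv where
  "unit_rv T SS Sv Qv Yp i \<omega> =
     (Sv i \<omega>, Qv i \<omega>, restrict (\<lambda>(g,t). Yp i \<omega> g t) (insert \<infinity> SS \<times> {1..T}))"

(* E[X | S = s, Q = q] for unit 0 (units are identically distributed) *)
definition cond_exp_cell :: "'a measure \<Rightarrow> (nat \<Rightarrow> 'a \<Rightarrow> enat) \<Rightarrow> (nat \<Rightarrow> 'a \<Rightarrow> bool) \<Rightarrow> ('a \<Rightarrow> real) \<Rightarrow> enat \<Rightarrow> bool \<Rightarrow> real" where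
  "cond_exp_cell M Sv Qv X s q =
     (\<integral>\<omega>. X \<omega> * indicator {\<omega>\<in>space M. Sv 0 \<omega> = s \<and> Qv 0 \<omega> = q} \<omega> \<partial>M)
       / measure M {\<omega>\<in>space M. Sv 0 \<omega> = s \<and> Qv 0 \<omega> = q}"

definition Delta_trend where
  "Delta_trend M Sv Qv Yp t s q =
     cond_exp_cell M Sv Qv (\<lambda>\<omega>. Yp 0 \<omega> \<infinity> t - Yp 0 \<omega> \<infinity> (t - 1)) s q"

definition CATT where
  "CATT M Sv Qv Yp g e =
     cond_exp_cell M Sv Qv
       (\<lambda>\<omega>. Yp 0 \<omega> (enat g) (nat (int g + e)) - Yp 0 \<omega> \<infinity> (nat (int g + e))) (enat g) True"

end

theory Submission
  imports Defs
begin

text \<open>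
  Within one stack and one period the regression only sees the four (cohort, eligibility) cell
  means. Profiling out the cohort-by-period and eligibility-by-period fixed effects leaves, up to a
  term free of \<open>\<tau>\<close>, the weighted square \<open>V\<^sub>g (\<tau>\<^sup>s\<^sup>a\<^sup>t\<^sub>g\<^sub>,\<^sub>t - \<tau>\<^sub>t\<^sub>-\<^sub>g)\<^sup>2\<close>, by Cauchy-Schwarz with
  its equality case. So \<open>\<tau>\<^sub>e\<close> solves a weighted least-squares problem over the stacks with
  \<open>g + e\<close> in the window and is the \<open>V\<^sub>g\<close>-weighted mean of the \<open>\<tau>\<^sup>s\<^sup>a\<^sup>t\<^sub>g\<^sub>,\<^sub>g\<^sub>+\<^sub>e\<close>.

  Asymptotically, a Chebyshev weak law of large numbers makes cell shares and cell means
  consistent, so the weights converge by continuity and each \<open>\<tau>\<^sup>s\<^sup>a\<^sup>t\<^sub>g\<^sub>,\<^sub>t\<close> converges to a triple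
  difference of conditional mean increments. No anticipation turns the treated eligible increment
  into \<open>CATT(g, t - g)\<close> plus an untreated increment, and DDD parallel trends make the triple
  difference of untreated levels constant over the window, so the untreated parts cancel.\<close>

section \<open>Least squares on a two-by-two table\<close>

lemma sum_power2_diff_eq_sum_power2_diff_mean:
  fixes y :: "'a \<Rightarrow> real"
  assumes "finite A"
  shows "(\<Sum>i\<in>A. (y i - c)\<^sup>2)
       = (\<Sum>i\<in>A. (y i - sum y A / card A)\<^sup>2) + card A * (sum y A / card A - c)\<^sup>2"
proof (cases "A = {}")
  case False
  define m where "m = sum y A / card A"
  have sum_y: "sum y A = card A * m"
    using assms False by (simp add: m_def)
  have "(\<Sum>i\<in>A. (y i - c)\<^sup>2) = (\<Sum>i\<in>A. (y i - m)\<^sup>2 + 2 * (m - c) * (y i - m) + (m - c)\<^sup>2)"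
    by (rule sum.cong) (auto simp: power2_eq_square algebra_simps)
  also have "\<dots> = (\<Sum>i\<in>A. (y i - m)\<^sup>2) + 2 * (m - c) * (\<Sum>i\<in>A. y i - m) + card A * (m - c)\<^sup>2"
    by (simp add: sum.distrib sum_distrib_left)
  also have "(\<Sum>i\<in>A. y i - m) = 0"
    using sum_y by (simp add: sum_subtractf)
  finally show ?thesis
    by (simp add: m_def)
qed simp

lemma two_mult_le_square_add_square_div:
  fixes a l r :: real
  assumes "0 < a"
  shows "2 * l * r \<le> a * r\<^sup>2 + l\<^sup>2 / a"
proof -
  have "0 \<le> (a * r - l)\<^sup>2 / a"
    using assms by simp
  also have "(a * r - l)\<^sup>2 / a = a * r\<^sup>2 - 2 * l * r + l\<^sup>2 / a"
    using assms by (simp add: power2_eq_square field_simps)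
  finally show ?thesis by simp
qed

lemma ddd_contrast_square_le:
  fixes n1 n2 n3 n4 r1 r2 r3 r4 :: real
  assumes "0 < n1" "0 < n2" "0 < n3" "0 < n4"
  shows "inverse (1/n1 + 1/n2 + 1/n3 + 1/n4) * (r1 - r2 - r3 + r4)\<^sup>2
          \<le> n1 * r1\<^sup>2 + n2 * r2\<^sup>2 + n3 * r3\<^sup>2 + n4 * r4\<^sup>2"
proof -
  define H where "H = 1/n1 + 1/n2 + 1/n3 + 1/n4"
  define D where "D = r1 - r2 - r3 + r4"
  define l where "l = D / H"
  have "0 < H"
    using assms unfolding H_def by (intro add_pos_pos) auto
  then have "inverse H * D\<^sup>2 = 2 * l * D - l\<^sup>2 * H"
    by (simp add: l_def power2_eq_square field_simps)
  also have "\<dots> = 2 * l * r1 + 2 * (-l) * r2 + 2 * (-l) * r3 + 2 * l * r4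
                  - (l\<^sup>2 / n1 + (-l)\<^sup>2 / n2 + (-l)\<^sup>2 / n3 + l\<^sup>2 / n4)"
    by (simp add: D_def H_def algebra_simps power2_eq_square)
  also have "\<dots> \<le> n1 * r1\<^sup>2 + n2 * r2\<^sup>2 + n3 * r3\<^sup>2 + n4 * r4\<^sup>2"
    using two_mult_le_square_add_square_div[OF assms(1), of l r1]
      two_mult_le_square_add_square_div[OF assms(2), of "-l" r2]
      two_mult_le_square_add_square_div[OF assms(3), of "-l" r3]
      two_mult_le_square_add_square_div[OF assms(4), of l r4]
    by linarith
  finally show ?thesis
    by (simp add: H_def D_def)
qed

text \<open>
  Cells are ordered (treated, eligible), (treated, ineligible), (comparison, eligible),
  (comparison, ineligible), with counts \<open>n\<^sub>k\<close> and means \<open>m\<^sub>k\<close>; \<open>inverse (\<Sum>k. 1 / n\<^sub>k)\<close> is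
  the paper's \<open>V\<^sub>g\<close>. A cohort effect (\<open>a\<close> or \<open>c\<close>) plus an eligibility effect (\<open>b\<^sub>1\<close> or \<open>b\<^sub>0\<close>),
  with the treated eligible cell shifted by \<open>d\<close>, fits the means up to exactly the weighted squared
  triple difference.\<close>

lemma two_way_fit_lower_bound:
  fixes n1 n2 n3 n4 :: real
  assumes "0 < n1" "0 < n2" "0 < n3" "0 < n4"
  shows "inverse (1/n1 + 1/n2 + 1/n3 + 1/n4) * (m1 - m2 - m3 + m4 - d)\<^sup>2
          \<le> n1 * (m1 - (a + b1 + d))\<^sup>2 + n2 * (m2 - (a + b0))\<^sup>2
            + n3 * (m3 - (c + b1))\<^sup>2 + n4 * (m4 - (c + b0))\<^sup>2"
  using ddd_contrast_square_le[OF assms, of "m1 - (a + b1 + d)" "m2 - (a + b0)" "m3 - (c + b1)" "m4 - (c + b0)"]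
  by (simp add: algebra_simps)

lemma two_way_fit_attained:
  fixes n1 n2 n3 n4 :: real
  assumes "0 < n1" "0 < n2" "0 < n3" "0 < n4"
  shows "\<exists>a c b1 b0. n1 * (m1 - (a + b1 + d))\<^sup>2 + n2 * (m2 - (a + b0))\<^sup>2
            + n3 * (m3 - (c + b1))\<^sup>2 + n4 * (m4 - (c + b0))\<^sup>2
          = inverse (1/n1 + 1/n2 + 1/n3 + 1/n4) * (m1 - m2 - m3 + m4 - d)\<^sup>2"
proof -
  define V where "V = inverse (1/n1 + 1/n2 + 1/n3 + 1/n4)"
  define D where "D = m1 - m2 - m3 + m4 - d"
  have VH: "V * (1/n1 + 1/n2 + 1/n3 + 1/n4) = 1"
  proof -
    have "0 < 1/n1 + 1/n2 + 1/n3 + 1/n4"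
      using assms by (intro add_pos_pos) auto
    then show ?thesis
      unfolding V_def by simp
  qed
  \<comment> \<open>residuals \<open>\<plusminus>V D / n\<^sub>k\<close>: the equality case of the Young-type bound\<close>
  define a where "a = m2 + V * D / n2"
  define c where "c = m4 - V * D / n4"
  define b1 where "b1 = m3 + V * D / n3 - c"
  have r1: "m1 - (a + b1 + d) = V * D / n1"
  proof -
    have "V * D / n1 + V * D / n2 + V * D / n3 + V * D / n4 = D * (V * (1/n1 + 1/n2 + 1/n3 + 1/n4))"
      by (simp add: algebra_simps)
    then have "V * D / n1 + V * D / n2 + V * D / n3 + V * D / n4 = D"
      using VH by simp
    then show ?thesis
      unfolding a_def b1_def c_def D_def by linarith
  qed
  have "n1 * (V * D / n1)\<^sup>2 + n2 * (V * D / n2)\<^sup>2 + n3 * (V * D / n3)\<^sup>2 + n4 * (V * D / n4)\<^sup>2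
        = V * D\<^sup>2 * (V * (1/n1 + 1/n2 + 1/n3 + 1/n4))"
    using assms by (simp add: power2_eq_square field_simps)
  then have "n1 * (m1 - (a + b1 + d))\<^sup>2 + n2 * (m2 - (a + 0))\<^sup>2
            + n3 * (m3 - (c + b1))\<^sup>2 + n4 * (m4 - (c + 0))\<^sup>2 = V * D\<^sup>2"
    unfolding r1 using VH by (simp add: a_def b1_def c_def power2_eq_square)
  then show ?thesis
    unfolding V_def D_def by blast
qed

lemma weighted_sum_squares_group_means:
  fixes v D :: "'x \<Rightarrow> real" and \<kappa> :: "'x \<Rightarrow> 'e" and \<tau> :: "'e \<Rightarrow> real"
  assumes "finite P" and "\<And>x. x \<in> P \<Longrightarrow> 0 < v x"
  defines "\<mu> \<equiv> \<lambda>e. (\<Sum>x\<in>{x\<in>P. \<kappa> x = e}. v x * D x) / (\<Sum>x\<in>{x\<in>P. \<kappa> x = e}. v x)"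
  shows "(\<Sum>x\<in>P. v x * (D x - \<tau> (\<kappa> x))\<^sup>2)
       = (\<Sum>x\<in>P. v x * (D x - \<mu> (\<kappa> x))\<^sup>2) + (\<Sum>x\<in>P. v x * (\<mu> (\<kappa> x) - \<tau> (\<kappa> x))\<^sup>2)"
proof -
  have group_orth: "(\<Sum>x\<in>{x\<in>P. \<kappa> x = e}. v x * (D x - \<mu> (\<kappa> x)) * (\<mu> (\<kappa> x) - \<tau> (\<kappa> x))) = 0"
    if "e \<in> \<kappa> ` P" for e
  proof -
    define A where "A = {x\<in>P. \<kappa> x = e}"
    have "0 < sum v A"
      using that assms(1,2) by (intro sum_pos) (auto simp: A_def)
    then have mean: "\<mu> e * sum v A = (\<Sum>x\<in>A. v x * D x)"
      by (simp add: \<mu>_def A_def)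
    have "(\<Sum>x\<in>A. v x * (D x - \<mu> (\<kappa> x)) * (\<mu> (\<kappa> x) - \<tau> (\<kappa> x)))
        = (\<Sum>x\<in>A. (\<mu> e - \<tau> e) * (v x * D x) - (\<mu> e - \<tau> e) * \<mu> e * v x)"
      by (rule sum.cong) (auto simp: A_def algebra_simps)
    also have "\<dots> = (\<mu> e - \<tau> e) * (\<Sum>x\<in>A. v x * D x) - (\<mu> e - \<tau> e) * \<mu> e * sum v A"
      by (simp add: sum_subtractf sum_distrib_left)
    also have "\<dots> = (\<mu> e - \<tau> e) * ((\<Sum>x\<in>A. v x * D x) - \<mu> e * sum v A)"
      by (simp add: algebra_simps)
    finally have "(\<Sum>x\<in>A. v x * (D x - \<mu> (\<kappa> x)) * (\<mu> (\<kappa> x) - \<tau> (\<kappa> x)))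
        = (\<mu> e - \<tau> e) * ((\<Sum>x\<in>A. v x * D x) - \<mu> e * sum v A)" .
    then show ?thesis
      using mean by (simp add: A_def)
  qed
  have "(\<Sum>x\<in>P. v x * (D x - \<mu> (\<kappa> x)) * (\<mu> (\<kappa> x) - \<tau> (\<kappa> x)))
      = (\<Sum>e\<in>\<kappa> ` P. \<Sum>x\<in>{x\<in>P. \<kappa> x = e}. v x * (D x - \<mu> (\<kappa> x)) * (\<mu> (\<kappa> x) - \<tau> (\<kappa> x)))"
    using assms(1) by (intro sum.group[symmetric]) auto
  also have "\<dots> = 0"
    using group_orth by simp
  finally have cross: "(\<Sum>x\<in>P. v x * (D x - \<mu> (\<kappa> x)) * (\<mu> (\<kappa> x) - \<tau> (\<kappa> x))) = 0" .
  have "(\<Sum>x\<in>P. v x * (D x - \<tau> (\<kappa> x))\<^sup>2)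
      = (\<Sum>x\<in>P. v x * (D x - \<mu> (\<kappa> x))\<^sup>2 + 2 * (v x * (D x - \<mu> (\<kappa> x)) * (\<mu> (\<kappa> x) - \<tau> (\<kappa> x)))
                 + v x * (\<mu> (\<kappa> x) - \<tau> (\<kappa> x))\<^sup>2)"
    by (rule sum.cong) (auto simp: power2_eq_square algebra_simps)
  also have "\<dots> = (\<Sum>x\<in>P. v x * (D x - \<mu> (\<kappa> x))\<^sup>2) + (\<Sum>x\<in>P. v x * (\<mu> (\<kappa> x) - \<tau> (\<kappa> x))\<^sup>2)"
    using cross by (simp add: sum.distrib sum_distrib_left[symmetric])
  finally show ?thesis .
qed

section \<open>The stacked regression for a fixed sample\<close>

locale stacked_regression =
  fixes T L K :: nat and SS :: "enat set" and gc :: "nat \<Rightarrow> enat"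
    and n :: nat and S :: "nat \<Rightarrow> enat" and Q :: "nat \<Rightarrow> bool" and Y :: "nat \<Rightarrow> nat \<Rightarrow> real"
  assumes finite_Gtrg: "finite (Gtrg SS)"
    and gc_neq: "\<And>g. g \<in> Gtrg SS \<Longrightarrow> gc g \<noteq> enat g"
    and cells_nonempty: "\<forall>g\<in>Gtrg SS. \<forall>s\<in>{enat g, gc g}. \<forall>q. 0 < cell_n n S Q s q"
begin

lemma cell_n_pos: "g \<in> Gtrg SS \<Longrightarrow> s \<in> {enat g, gc g} \<Longrightarrow> 0 < cell_n n S Q s q"
  using cells_nonempty by blast

definition cell :: "enat \<Rightarrow> bool \<Rightarrow> nat set" where
  "cell s q = {i. i < n \<and> S i = s \<and> Q i = q}"

definition stack_cells :: "nat \<Rightarrow> (enat \<times> bool) set" where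
  "stack_cells g = {enat g, gc g} \<times> UNIV"

definition stack_units :: "nat \<Rightarrow> nat set" where
  "stack_units g = {i. i < n \<and> (S i = enat g \<or> S i = gc g)}"

definition stack_periods :: "(nat \<times> nat) set" where
  "stack_periods = (SIGMA g:Gtrg SS. window T L K g)"

definition event_dummy :: "(int \<Rightarrow> real) \<Rightarrow> nat \<Rightarrow> nat \<Rightarrow> real" where
  "event_dummy tau g t = (if int t - int g \<in> event_times L K then tau (int t - int g) else 0)"

definition fitted ::
  "(enat \<Rightarrow> nat \<Rightarrow> nat \<Rightarrow> real) \<times> (bool \<Rightarrow> nat \<Rightarrow> nat \<Rightarrow> real) \<times> (int \<Rightarrow> real)
     \<Rightarrow> enat \<Rightarrow> bool \<Rightarrow> nat \<Rightarrow> nat \<Rightarrow> real" where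
  "fitted p s q t g = (case p of (lam, eta, tau) \<Rightarrow>
     lam s t g + eta q t g + (if s = enat g \<and> q then event_dummy tau g t else 0))"

definition within_ss :: "nat \<Rightarrow> nat \<Rightarrow> real" where
  "within_ss g t = (\<Sum>(s, q)\<in>stack_cells g. \<Sum>i\<in>cell s q. (dY Y i t g - cell_mean n S Q Y g s q t)\<^sup>2)"

definition profile_ssr :: "(int \<Rightarrow> real) \<Rightarrow> real" where
  "profile_ssr tau = (\<Sum>(g, t)\<in>stack_periods.
     within_ss g t + V_stack gc n S Q g * (tau_sat gc n S Q Y g t - event_dummy tau g t)\<^sup>2)"

lemma finite_stack_periods: "finite stack_periods"
proof -
  have "finite (window T L K g)" for g
    unfolding window_def by (rule finite_subset[of _ "{..T}"]) auto
  then show ?thesis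
    unfolding stack_periods_def using finite_Gtrg by auto
qed

lemma sum_stack_cells:
  assumes "g \<in> Gtrg SS"
  shows "(\<Sum>(s, q)\<in>stack_cells g. f s q) = f (enat g) True + f (enat g) False + f (gc g) True + f (gc g) False"
proof -
  have "stack_cells g = {(enat g, True), (enat g, False), (gc g, True), (gc g, False)}"
    by (auto simp: stack_cells_def)
  then show ?thesis
    using gc_neq[OF assms] by (simp add: algebra_simps)
qed

lemma sum_stack_units:
  assumes "g \<in> Gtrg SS"
  shows "(\<Sum>i\<in>stack_units g. f i) = (\<Sum>(s, q)\<in>stack_cells g. \<Sum>i\<in>cell s q. f i)"
proof -
  have "stack_units g = (\<Union>x\<in>stack_cells g. cell (fst x) (snd x))"
    by (auto simp: stack_units_def stack_cells_def cell_def)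
  also have "sum f \<dots> = (\<Sum>x\<in>stack_cells g. sum f (cell (fst x) (snd x)))"
    by (intro sum.UNION_disjoint) (auto simp: stack_cells_def cell_def)
  finally show ?thesis
    by (simp add: case_prod_beta)
qed

lemma event_sum_eq_event_dummy:
  "(\<Sum>e\<in>event_times L K. tau e * (if S i = enat g \<and> Q i \<and> int t = int g + e then 1 else 0))
     = (if S i = enat g \<and> Q i then event_dummy tau g t else 0)"
proof (cases "S i = enat g \<and> Q i")
  case True
  have "finite (event_times L K)"
    by (simp add: event_times_def)
  moreover have "(\<Sum>e\<in>event_times L K. tau e * (if S i = enat g \<and> Q i \<and> int t = int g + e then 1 else 0))
      = (\<Sum>e\<in>event_times L K. if e = int t - int g then tau e else 0)"
    using True by (intro sum.cong) auto
  ultimately show ?thesis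
    using True by (simp add: event_dummy_def)
next
  case False
  then show ?thesis
    by (auto intro!: sum.neutral)
qed

lemma ssr_eq_sum_stack_periods:
  "ssr T L K SS gc n S Q Y p
     = (\<Sum>(g, t)\<in>stack_periods. \<Sum>i\<in>stack_units g. (dY Y i t g - fitted p (S i) (Q i) t g)\<^sup>2)"
proof -
  obtain lam eta tau where p: "p = (lam, eta, tau)"
    by (cases p) auto
  have obs: "stack_obs T L K SS gc n S = (\<lambda>((g, t), i). (i, t, g)) ` (SIGMA x:stack_periods. stack_units (fst x))"
    unfolding stack_obs_def stack_periods_def stack_units_def by (auto simp: image_iff)
  have inj: "inj_on (\<lambda>((g, t), i). (i, t, g)) (SIGMA x:stack_periods. stack_units (fst x))"
    by (auto simp: inj_on_def)
  have "ssr T L K SS gc n S Q Y p = (\<Sum>(i, t, g)\<in>stack_obs T L K SS gc n S. (dY Y i t g - fitted p (S i) (Q i) t g)\<^sup>2)"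
    unfolding ssr_def p fitted_def by (simp add: event_sum_eq_event_dummy diff_diff_eq add.assoc)
  also have "\<dots> = (\<Sum>((g, t), i)\<in>(SIGMA x:stack_periods. stack_units (fst x)). (dY Y i t g - fitted p (S i) (Q i) t g)\<^sup>2)"
    unfolding obs by (subst sum.reindex[OF inj]) (simp add: case_prod_beta)
  also have "\<dots> = (\<Sum>x\<in>stack_periods. \<Sum>i\<in>stack_units (fst x). (dY Y i (snd x) (fst x) - fitted p (S i) (Q i) (snd x) (fst x))\<^sup>2)"
    using finite_stack_periods by (subst sum.Sigma[symmetric]) (auto simp: stack_units_def case_prod_beta)
  finally show ?thesis
    by (simp add: case_prod_beta)
qed

lemma stack_period_ssr:
  assumes "g \<in> Gtrg SS"
  shows "(\<Sum>i\<in>stack_units g. (dY Y i t g - fitted p (S i) (Q i) t g)\<^sup>2)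
       = within_ss g t
         + (\<Sum>(s, q)\<in>stack_cells g. cell_n n S Q s q * (cell_mean n S Q Y g s q t - fitted p s q t g)\<^sup>2)"
proof -
  have in_cell: "(\<Sum>i\<in>cell s q. (dY Y i t g - fitted p (S i) (Q i) t g)\<^sup>2)
      = (\<Sum>i\<in>cell s q. (dY Y i t g - cell_mean n S Q Y g s q t)\<^sup>2)
        + cell_n n S Q s q * (cell_mean n S Q Y g s q t - fitted p s q t g)\<^sup>2" for s q
  proof -
    have "(\<Sum>i\<in>cell s q. (dY Y i t g - fitted p (S i) (Q i) t g)\<^sup>2)
        = (\<Sum>i\<in>cell s q. (dY Y i t g - fitted p s q t g)\<^sup>2)"
      by (intro sum.cong) (auto simp: cell_def)
    also have "\<dots> = (\<Sum>i\<in>cell s q. (dY Y i t g - cell_mean n S Q Y g s q t)\<^sup>2)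
        + cell_n n S Q s q * (cell_mean n S Q Y g s q t - fitted p s q t g)\<^sup>2"
      by (subst sum_power2_diff_eq_sum_power2_diff_mean) (simp_all add: cell_def cell_mean_def cell_n_def)
    finally show ?thesis .
  qed
  show ?thesis
    unfolding sum_stack_units[OF assms] within_ss_def in_cell
    by (simp add: sum.distrib case_prod_beta)
qed

lemma sum_stack_cells_fitted:
  assumes "g \<in> Gtrg SS"
  shows "(\<Sum>(s, q)\<in>stack_cells g. cell_n n S Q s q * (cell_mean n S Q Y g s q t - fitted (lam, eta, tau) s q t g)\<^sup>2)
     = cell_n n S Q (enat g) True * (cell_mean n S Q Y g (enat g) True t - (lam (enat g) t g + eta True t g + event_dummy tau g t))\<^sup>2
     + cell_n n S Q (enat g) False * (cell_mean n S Q Y g (enat g) False t - (lam (enat g) t g + eta False t g))\<^sup>2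
     + cell_n n S Q (gc g) True * (cell_mean n S Q Y g (gc g) True t - (lam (gc g) t g + eta True t g))\<^sup>2
     + cell_n n S Q (gc g) False * (cell_mean n S Q Y g (gc g) False t - (lam (gc g) t g + eta False t g))\<^sup>2"
  using gc_neq[OF assms] by (simp add: sum_stack_cells[OF assms] fitted_def)

lemma tau_sat_diff_eq:
  "tau_sat gc n S Q Y g t - d
     = cell_mean n S Q Y g (enat g) True t - cell_mean n S Q Y g (enat g) False t
       - cell_mean n S Q Y g (gc g) True t + cell_mean n S Q Y g (gc g) False t - d"
  by (simp add: tau_sat_def)

lemma stack_period_ssr_lower_bound:
  assumes g: "g \<in> Gtrg SS"
  shows "within_ss g t + V_stack gc n S Q g * (tau_sat gc n S Q Y g t - event_dummy tau g t)\<^sup>2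
       \<le> (\<Sum>i\<in>stack_units g. (dY Y i t g - fitted (lam, eta, tau) (S i) (Q i) t g)\<^sup>2)"
  unfolding stack_period_ssr[OF g] sum_stack_cells_fitted[OF g] tau_sat_diff_eq V_stack_def
  using two_way_fit_lower_bound cell_n_pos[OF g] by simp

lemma profile_ssr_le_ssr: "profile_ssr tau \<le> ssr T L K SS gc n S Q Y (lam, eta, tau)"
  unfolding ssr_eq_sum_stack_periods profile_ssr_def
  by (rule sum_mono) (auto simp: stack_periods_def intro: stack_period_ssr_lower_bound)

lemma ssr_attains_profile_ssr: "\<exists>lam eta. ssr T L K SS gc n S Q Y (lam, eta, tau) = profile_ssr tau"
proof -
  let ?m = "\<lambda>g t s q. cell_mean n S Q Y g s q t" and ?n = "\<lambda>s q. real (cell_n n S Q s q)"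
  let ?fit = "\<lambda>g t a c b1 b0.
      ?n (enat g) True * (?m g t (enat g) True - (a + b1 + event_dummy tau g t))\<^sup>2
    + ?n (enat g) False * (?m g t (enat g) False - (a + b0))\<^sup>2
    + ?n (gc g) True * (?m g t (gc g) True - (c + b1))\<^sup>2 + ?n (gc g) False * (?m g t (gc g) False - (c + b0))\<^sup>2
    = V_stack gc n S Q g * (tau_sat gc n S Q Y g t - event_dummy tau g t)\<^sup>2"
  have "\<forall>x\<in>stack_periods. \<exists>z. ?fit (fst x) (snd x) (fst z) (fst (snd z)) (fst (snd (snd z))) (snd (snd (snd z)))"
  proof
    fix x assume "x \<in> stack_periods"
    then have g: "fst x \<in> Gtrg SS"
      by (auto simp: stack_periods_def)
    have pos: "0 < ?n (enat (fst x)) True" "0 < ?n (enat (fst x)) False" "0 < ?n (gc (fst x)) True" "0 < ?n (gc (fst x)) False"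
      using cell_n_pos[OF g] by simp_all
    obtain a c b1 b0 where "?fit (fst x) (snd x) a c b1 b0"
      unfolding tau_sat_diff_eq V_stack_def using two_way_fit_attained[OF pos] by blast
    then show "\<exists>z. ?fit (fst x) (snd x) (fst z) (fst (snd z)) (fst (snd (snd z))) (snd (snd (snd z)))"
      by (intro exI[of _ "(a, c, b1, b0)"]) simp
  qed
  from bchoice[OF this] obtain F where F: "\<And>g t. (g, t) \<in> stack_periods \<Longrightarrow>
      ?fit g t (fst (F (g, t))) (fst (snd (F (g, t)))) (fst (snd (snd (F (g, t))))) (snd (snd (snd (F (g, t)))))"
    by force
  define lam where "lam s t g = (if s = enat g then fst (F (g, t)) else fst (snd (F (g, t))))" for s t g
  define eta where "eta q t g = (if q then fst (snd (snd (F (g, t)))) else snd (snd (snd (F (g, t)))))" for q t g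
  have "ssr T L K SS gc n S Q Y (lam, eta, tau) = profile_ssr tau"
    unfolding ssr_eq_sum_stack_periods profile_ssr_def
  proof (intro sum.cong refl, clarify)
    fix g t assume gt: "(g, t) \<in> stack_periods"
    then have g: "g \<in> Gtrg SS"
      by (simp add: stack_periods_def)
    show "(\<Sum>i\<in>stack_units g. (dY Y i t g - fitted (lam, eta, tau) (S i) (Q i) t g)\<^sup>2)
        = within_ss g t + V_stack gc n S Q g * (tau_sat gc n S Q Y g t - event_dummy tau g t)\<^sup>2"
      unfolding stack_period_ssr[OF g] sum_stack_cells_fitted[OF g] using F[OF gt] gc_neq[OF g]
      by (simp add: lam_def eta_def)
  qed
  then show ?thesis
    by blast
qed

definition event_time :: "nat \<times> nat \<Rightarrow> int" where
  "event_time x = int (snd x) - int (fst x)"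

definition event_periods :: "(nat \<times> nat) set" where
  "event_periods = {x\<in>stack_periods. event_time x \<in> event_times L K}"

definition tau_hat :: "int \<Rightarrow> real" where
  "tau_hat e = (\<Sum>x\<in>{x\<in>event_periods. event_time x = e}. V_stack gc n S Q (fst x) * tau_sat gc n S Q Y (fst x) (snd x))
             / (\<Sum>x\<in>{x\<in>event_periods. event_time x = e}. V_stack gc n S Q (fst x))"

lemma V_stack_pos: "g \<in> Gtrg SS \<Longrightarrow> 0 < V_stack gc n S Q g"
  using cell_n_pos unfolding V_stack_def by (auto intro!: add_pos_pos)

lemma V_stack_event_periods_pos: "x \<in> event_periods \<Longrightarrow> 0 < V_stack gc n S Q (fst x)"
  by (auto simp: event_periods_def stack_periods_def intro: V_stack_pos)

lemma finite_event_periods: "finite event_periods"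
  using finite_stack_periods by (simp add: event_periods_def)

lemma profile_ssr_split:
  "profile_ssr tau = (\<Sum>(g, t)\<in>stack_periods. within_ss g t)
     + (\<Sum>x\<in>stack_periods - event_periods. V_stack gc n S Q (fst x) * (tau_sat gc n S Q Y (fst x) (snd x))\<^sup>2)
     + (\<Sum>x\<in>event_periods. V_stack gc n S Q (fst x) * (tau_sat gc n S Q Y (fst x) (snd x) - tau (event_time x))\<^sup>2)"
proof -
  let ?r = "\<lambda>x. V_stack gc n S Q (fst x) * (tau_sat gc n S Q Y (fst x) (snd x) - event_dummy tau (fst x) (snd x))\<^sup>2"
  have "profile_ssr tau = (\<Sum>(g, t)\<in>stack_periods. within_ss g t) + (\<Sum>x\<in>stack_periods. ?r x)"
    unfolding profile_ssr_def by (simp add: sum.distrib case_prod_beta)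
  also have "(\<Sum>x\<in>stack_periods. ?r x) = (\<Sum>x\<in>stack_periods - event_periods. ?r x) + (\<Sum>x\<in>event_periods. ?r x)"
    using finite_stack_periods by (subst sum.subset_diff[of event_periods]) (auto simp: event_periods_def)
  finally show ?thesis
    by (simp add: event_dummy_def event_periods_def event_time_def)
qed

lemma profile_ssr_eq_tau_hat:
  "profile_ssr tau = profile_ssr tau_hat
     + (\<Sum>x\<in>event_periods. V_stack gc n S Q (fst x) * (tau_hat (event_time x) - tau (event_time x))\<^sup>2)"
  using weighted_sum_squares_group_means[OF finite_event_periods V_stack_event_periods_pos,
      where D = "\<lambda>x. tau_sat gc n S Q Y (fst x) (snd x)" and \<kappa> = event_time]
  unfolding profile_ssr_split tau_hat_def[abs_def] by simp

lemma profile_ssr_tau_hat_le: "profile_ssr tau_hat \<le> profile_ssr tau"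
proof -
  have "0 \<le> (\<Sum>x\<in>event_periods. V_stack gc n S Q (fst x) * (tau_hat (event_time x) - tau (event_time x))\<^sup>2)"
    by (intro sum_nonneg mult_nonneg_nonneg less_imp_le[OF V_stack_event_periods_pos]) auto
  then show ?thesis
    using profile_ssr_eq_tau_hat[of tau] by linarith
qed

lemma ex_is_ols_tau_hat: "\<exists>lam eta. is_ols T L K SS gc n S Q Y (lam, eta, tau_hat)"
proof -
  obtain lam eta where fit: "ssr T L K SS gc n S Q Y (lam, eta, tau_hat) = profile_ssr tau_hat"
    using ssr_attains_profile_ssr by blast
  have "ssr T L K SS gc n S Q Y (lam, eta, tau_hat) \<le> ssr T L K SS gc n S Q Y (lam', eta', tau')" for lam' eta' tau'
    using profile_ssr_tau_hat_le[of tau'] profile_ssr_le_ssr[of tau' lam' eta'] unfolding fit by linarith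
  then show ?thesis
    unfolding is_ols_def by (metis prod_cases3)
qed

lemma is_ols_imp_tau_hat:
  assumes ols: "is_ols T L K SS gc n S Q Y (lam, eta, tau)"
    and e: "x\<^sub>0 \<in> event_periods" "event_time x\<^sub>0 = e"
  shows "tau e = tau_hat e"
proof -
  obtain lam' eta' where fit: "ssr T L K SS gc n S Q Y (lam', eta', tau_hat) = profile_ssr tau_hat"
    using ssr_attains_profile_ssr by blast
  have "ssr T L K SS gc n S Q Y (lam, eta, tau) \<le> ssr T L K SS gc n S Q Y (lam', eta', tau_hat)"
    using ols unfolding is_ols_def by blast
  then have "profile_ssr tau \<le> profile_ssr tau_hat"
    using profile_ssr_le_ssr[of tau lam eta] unfolding fit by linarith
  then have "(\<Sum>x\<in>event_periods. V_stack gc n S Q (fst x) * (tau_hat (event_time x) - tau (event_time x))\<^sup>2) \<le> 0"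
    using profile_ssr_eq_tau_hat[of tau] by linarith
  moreover have "V_stack gc n S Q (fst x\<^sub>0) * (tau_hat e - tau e)\<^sup>2
      \<le> (\<Sum>x\<in>event_periods. V_stack gc n S Q (fst x) * (tau_hat (event_time x) - tau (event_time x))\<^sup>2)"
    unfolding e(2)[symmetric] using e(1) finite_event_periods
    by (intro member_le_sum mult_nonneg_nonneg less_imp_le[OF V_stack_event_periods_pos]) auto
  ultimately have "V_stack gc n S Q (fst x\<^sub>0) * (tau_hat e - tau e)\<^sup>2 \<le> 0"
    by linarith
  then show ?thesis
    using V_stack_event_periods_pos[OF e(1)] by (simp add: mult_le_0_iff)
qed

lemma event_periods_at:
  assumes "e \<in> event_times L K"
  shows "{x\<in>event_periods. event_time x = e} = (\<lambda>g. (g, nat (int g + e))) ` Gtrg_e T SS e"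
proof -
  have "- int L \<le> e" "e \<le> int K"
    using assms by (auto simp: event_times_def)
  then show ?thesis
    using assms
    by (force simp: event_periods_def stack_periods_def event_time_def Gtrg_e_def window_def image_iff)
qed

lemma finite_Gtrg_e: "finite (Gtrg_e T SS e)"
  using finite_Gtrg by (simp add: Gtrg_e_def)

lemma tau_hat_eq_fwl_sum:
  assumes "e \<in> event_times L K"
  shows "tau_hat e = (\<Sum>g\<in>Gtrg_e T SS e. w_fwl T SS gc n S Q e g * tau_sat gc n S Q Y g (nat (int g + e)))"
proof -
  have inj: "inj_on (\<lambda>g. (g, nat (int g + e))) (Gtrg_e T SS e)"
    by (auto simp: inj_on_def)
  show ?thesis
    unfolding tau_hat_def event_periods_at[OF assms]
    by (simp add: sum.reindex[OF inj] w_fwl_def sum_divide_distrib)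
qed

lemma w_fwl_pos_sum_1:
  assumes "Gtrg_e T SS e \<noteq> {}"
  shows "\<forall>g\<in>Gtrg_e T SS e. 0 < w_fwl T SS gc n S Q e g"
    and "(\<Sum>g\<in>Gtrg_e T SS e. w_fwl T SS gc n S Q e g) = 1"
proof -
  have sub: "Gtrg_e T SS e \<subseteq> Gtrg SS"
    by (auto simp: Gtrg_e_def)
  have "0 < (\<Sum>g\<in>Gtrg_e T SS e. V_stack gc n S Q g)"
    using assms sub finite_Gtrg_e by (intro sum_pos) (auto intro: V_stack_pos)
  then show "\<forall>g\<in>Gtrg_e T SS e. 0 < w_fwl T SS gc n S Q e g" "(\<Sum>g\<in>Gtrg_e T SS e. w_fwl T SS gc n S Q e g) = 1"
    using sub V_stack_pos unfolding w_fwl_def by (auto simp: sum_divide_distrib[symmetric])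
qed

theorem is_ols_tau_eq_fwl_sum:
  assumes "is_ols T L K SS gc n S Q Y (lam, eta, tau)"
    and e: "e \<in> event_times L K" "Gtrg_e T SS e \<noteq> {}"
  shows "tau e = (\<Sum>g\<in>Gtrg_e T SS e. w_fwl T SS gc n S Q e g * tau_sat gc n S Q Y g (nat (int g + e)))"
proof -
  obtain g where "g \<in> Gtrg_e T SS e"
    using e(2) by blast
  then have "(g, nat (int g + e)) \<in> {x\<in>event_periods. event_time x = e}"
    unfolding event_periods_at[OF e(1)] by blast
  then show ?thesis
    using is_ols_imp_tau_hat[OF assms(1)] tau_hat_eq_fwl_sum[OF e(1)] by auto
qed

lemma ols_fwl_decomposition:
  assumes "e \<in> event_times L K" "Gtrg_e T SS e \<noteq> {}"
  shows "(\<exists>p. is_ols T L K SS gc n S Q Y p)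
       \<and> (\<forall>lam eta tau. is_ols T L K SS gc n S Q Y (lam, eta, tau) \<longrightarrow>
            tau e = (\<Sum>g\<in>Gtrg_e T SS e. w_fwl T SS gc n S Q e g * tau_sat gc n S Q Y g (nat (int g + e))))
       \<and> (\<forall>g\<in>Gtrg_e T SS e. 0 < w_fwl T SS gc n S Q e g)
       \<and> (\<Sum>g\<in>Gtrg_e T SS e. w_fwl T SS gc n S Q e g) = 1"
  using ex_is_ols_tau_hat is_ols_tau_eq_fwl_sum[OF _ assms] w_fwl_pos_sum_1[OF assms(2)] by blast

lemma ols_tau_eq_fwl_sum:
  assumes "e \<in> event_times L K" "Gtrg_e T SS e \<noteq> {}"
  shows "ols_tau T L K SS gc n S Q Y e
       = (\<Sum>g\<in>Gtrg_e T SS e. w_fwl T SS gc n S Q e g * tau_sat gc n S Q Y g (nat (int g + e)))"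
proof -
  let ?p = "SOME p. is_ols T L K SS gc n S Q Y p"
  have "\<exists>p. is_ols T L K SS gc n S Q Y p"
    using ex_is_ols_tau_hat by blast
  then have "is_ols T L K SS gc n S Q Y ?p"
    by (rule someI_ex)
  moreover obtain lam eta tau where "?p = (lam, eta, tau)"
    by (rule prod_cases3)
  ultimately show ?thesis
    using is_ols_tau_eq_fwl_sum[OF _ assms] by (simp add: ols_tau_def)
qed

end

section \<open>Convergence in probability\<close>

lemma measure_Un_tendsto_0:
  assumes "\<And>n. A n \<in> sets M" "\<And>n. B n \<in> sets M"
    and "(\<lambda>n. measure M (A n)) \<longlonglongrightarrow> 0" "(\<lambda>n. measure M (B n)) \<longlonglongrightarrow> 0"
  shows "(\<lambda>n. measure M (A n \<union> B n)) \<longlonglongrightarrow> 0"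
proof (rule tendsto_sandwich[OF _ _ tendsto_const])
  show "(\<lambda>n. measure M (A n) + measure M (B n)) \<longlonglongrightarrow> 0"
    using tendsto_add[OF assms(3,4)] by simp
  show "\<forall>\<^sub>F n in sequentially. measure M (A n \<union> B n) \<le> measure M (A n) + measure M (B n)"
    using assms(1,2) by (simp add: measure_Un_le)
qed simp

lemma conv_prob_const: "conv_prob M (\<lambda>n \<omega>. c) c"
  unfolding conv_prob_def by (intro allI impI exI[of _ "\<lambda>n. {}"]) auto

lemma conv_prob_eq_outside:
  assumes "conv_prob M Y c"
    and "\<And>n. B n \<in> sets M" "(\<lambda>n. measure M (B n)) \<longlonglongrightarrow> 0"
    and "\<And>n \<omega>. \<omega> \<in> space M \<Longrightarrow> \<omega> \<notin> B n \<Longrightarrow> X n \<omega> = Y n \<omega>"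
  shows "conv_prob M X c"
  unfolding conv_prob_def
proof (intro allI impI)
  fix \<epsilon> :: real assume "0 < \<epsilon>"
  then obtain A where A: "\<And>n. A n \<in> sets M" "\<And>n. {\<omega>\<in>space M. \<epsilon> < \<bar>Y n \<omega> - c\<bar>} \<subseteq> A n"
    and A_0: "(\<lambda>n. measure M (A n)) \<longlonglongrightarrow> 0"
    using assms(1) unfolding conv_prob_def by meson
  have "{\<omega>\<in>space M. \<epsilon> < \<bar>X n \<omega> - c\<bar>} \<subseteq> A n \<union> B n" for n
    using A(2)[of n] assms(4)[of _ n] by auto
  then show "\<exists>A. (\<forall>n. A n \<in> sets M \<and> {\<omega>\<in>space M. \<epsilon> < \<bar>X n \<omega> - c\<bar>} \<subseteq> A n) \<and> (\<lambda>n. measure M (A n)) \<longlonglongrightarrow> 0"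
    using A(1) assms(2) measure_Un_tendsto_0[OF A(1) assms(2) A_0 assms(3)]
    by (intro exI[of _ "\<lambda>n. A n \<union> B n"]) auto
qed

lemma conv_prob_eq_where_pos:
  assumes Y: "conv_prob M Y c" and Z: "conv_prob M Z d" "0 < d"
    and eq: "\<And>n \<omega>. \<omega> \<in> space M \<Longrightarrow> 0 < Z n \<omega> \<Longrightarrow> X n \<omega> = Y n \<omega>"
  shows "conv_prob M X c"
proof -
  have "0 < d / 2"
    using \<open>0 < d\<close> by simp
  then obtain B where B: "\<And>n. B n \<in> sets M" "\<And>n. {\<omega>\<in>space M. d / 2 < \<bar>Z n \<omega> - d\<bar>} \<subseteq> B n"
    and B_0: "(\<lambda>n. measure M (B n)) \<longlonglongrightarrow> 0"
    using Z unfolding conv_prob_def by meson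
  have "X n \<omega> = Y n \<omega>" if "\<omega> \<in> space M" "\<omega> \<notin> B n" for n \<omega>
  proof -
    have "\<bar>Z n \<omega> - d\<bar> \<le> d / 2"
      using B(2)[of n] that by force
    then have "0 < Z n \<omega>"
      using \<open>0 < d\<close> by linarith
    then show ?thesis
      using eq[OF that(1)] by simp
  qed
  then show ?thesis
    by (rule conv_prob_eq_outside[OF Y B(1) B_0])
qed

lemma conv_prob_isCont2:
  fixes f :: "real \<Rightarrow> real \<Rightarrow> real"
  assumes X: "conv_prob M X a" and Y: "conv_prob M Y b"
    and f: "isCont (\<lambda>z. f (fst z) (snd z)) (a, b)"
  shows "conv_prob M (\<lambda>n \<omega>. f (X n \<omega>) (Y n \<omega>)) (f a b)"
  unfolding conv_prob_def
proof (intro allI impI)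
  fix \<epsilon> :: real assume "0 < \<epsilon>"
  then obtain \<delta> where "0 < \<delta>" and \<delta>: "\<And>z. dist z (a, b) < \<delta> \<Longrightarrow> dist (f (fst z) (snd z)) (f a b) < \<epsilon>"
    using f unfolding continuous_at_eps_delta by fastforce
  then have "0 < \<delta> / 3"
    by simp
  obtain A where A: "\<And>n. A n \<in> sets M" "\<And>n. {\<omega>\<in>space M. \<delta> / 3 < \<bar>X n \<omega> - a\<bar>} \<subseteq> A n"
      "(\<lambda>n. measure M (A n)) \<longlonglongrightarrow> 0"
    using X \<open>0 < \<delta> / 3\<close> unfolding conv_prob_def by meson
  obtain B where B: "\<And>n. B n \<in> sets M" "\<And>n. {\<omega>\<in>space M. \<delta> / 3 < \<bar>Y n \<omega> - b\<bar>} \<subseteq> B n"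
      "(\<lambda>n. measure M (B n)) \<longlonglongrightarrow> 0"
    using Y \<open>0 < \<delta> / 3\<close> unfolding conv_prob_def by meson
  have "\<omega> \<in> A n \<union> B n" if "\<omega> \<in> space M" "\<epsilon> < \<bar>f (X n \<omega>) (Y n \<omega>) - f a b\<bar>" for n \<omega>
  proof (rule ccontr)
    assume "\<omega> \<notin> A n \<union> B n"
    then have "\<bar>X n \<omega> - a\<bar> \<le> \<delta> / 3" "\<bar>Y n \<omega> - b\<bar> \<le> \<delta> / 3"
      using A(2)[of n] B(2)[of n] that(1) by force+
    then have "dist (X n \<omega>, Y n \<omega>) (a, b) < \<delta>"
      using sqrt_sum_squares_le_sum_abs[of "X n \<omega> - a" "Y n \<omega> - b"] \<open>0 < \<delta>\<close>
      by (simp add: dist_Pair_Pair dist_real_def)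
    then show False
      using \<delta>[of "(X n \<omega>, Y n \<omega>)"] that(2) by (simp add: dist_real_def)
  qed
  then show "\<exists>A. (\<forall>n. A n \<in> sets M \<and> {\<omega>\<in>space M. \<epsilon> < \<bar>f (X n \<omega>) (Y n \<omega>) - f a b\<bar>} \<subseteq> A n)
      \<and> (\<lambda>n. measure M (A n)) \<longlonglongrightarrow> 0"
    using A(1) B(1) measure_Un_tendsto_0[OF A(1) B(1) A(3) B(3)]
    by (intro exI[of _ "\<lambda>n. A n \<union> B n"]) auto
qed

lemma conv_prob_add: "conv_prob M X a \<Longrightarrow> conv_prob M Y b \<Longrightarrow> conv_prob M (\<lambda>n \<omega>. X n \<omega> + Y n \<omega>) (a + b)"
  by (rule conv_prob_isCont2[where f = "(+)"]) (auto intro: continuous_intros)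

lemma conv_prob_diff: "conv_prob M X a \<Longrightarrow> conv_prob M Y b \<Longrightarrow> conv_prob M (\<lambda>n \<omega>. X n \<omega> - Y n \<omega>) (a - b)"
  by (rule conv_prob_isCont2[where f = "(-)"]) (auto intro: continuous_intros)

lemma conv_prob_mult: "conv_prob M X a \<Longrightarrow> conv_prob M Y b \<Longrightarrow> conv_prob M (\<lambda>n \<omega>. X n \<omega> * Y n \<omega>) (a * b)"
  by (rule conv_prob_isCont2[where f = "(*)"]) (auto intro: continuous_intros)

lemma conv_prob_inverse:
  assumes "conv_prob M X a" "a \<noteq> 0"
  shows "conv_prob M (\<lambda>n \<omega>. inverse (X n \<omega>)) (inverse a)"
proof -
  have "isCont (\<lambda>z. inverse (fst z)) (a, a)"
    using assms(2) by (auto intro!: continuous_intros)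
  then show ?thesis
    using conv_prob_isCont2[OF assms(1) assms(1), where f = "\<lambda>x y. inverse x"] by simp
qed

lemma conv_prob_divide:
  assumes "conv_prob M X a" "conv_prob M Y b" "b \<noteq> 0"
  shows "conv_prob M (\<lambda>n \<omega>. X n \<omega> / Y n \<omega>) (a / b)"
  using conv_prob_mult[OF assms(1) conv_prob_inverse[OF assms(2,3)]] by (simp add: divide_inverse)

lemma conv_prob_sum:
  assumes "finite I" "\<And>i. i \<in> I \<Longrightarrow> conv_prob M (X i) (c i)"
  shows "conv_prob M (\<lambda>n \<omega>. \<Sum>i\<in>I. X i n \<omega>) (\<Sum>i\<in>I. c i)"
  using assms
proof (induction I rule: finite_induct)
  case (insert i I)
  then have "conv_prob M (\<lambda>n \<omega>. X i n \<omega> + (\<Sum>i\<in>I. X i n \<omega>)) (c i + sum c I)"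
    by (intro conv_prob_add) auto
  then show ?case
    using insert.hyps by simp
qed (simp add: conv_prob_const)

lemma conv_prob_prod:
  assumes "finite I" "\<And>i. i \<in> I \<Longrightarrow> conv_prob M (X i) (c i)"
  shows "conv_prob M (\<lambda>n \<omega>. \<Prod>i\<in>I. X i n \<omega>) (\<Prod>i\<in>I. c i)"
  using assms
proof (induction I rule: finite_induct)
  case (insert i I)
  then have "conv_prob M (\<lambda>n \<omega>. X i n \<omega> * (\<Prod>i\<in>I. X i n \<omega>)) (c i * prod c I)"
    by (intro conv_prob_mult) auto
  then show ?case
    using insert.hyps by simp
qed (simp add: conv_prob_const)

section \<open>A weak law of large numbers\<close>

lemma integrable_integral_comp_eq_distr:
  fixes f :: "'b \<Rightarrow> real"
  assumes "U \<in> measurable M N" "V \<in> measurable M N" "distr M N U = distr M N V" "f \<in> borel_measurable N"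
  shows "integrable M (\<lambda>\<omega>. f (U \<omega>)) \<longleftrightarrow> integrable M (\<lambda>\<omega>. f (V \<omega>))"
    and "(\<integral>\<omega>. f (U \<omega>) \<partial>M) = (\<integral>\<omega>. f (V \<omega>) \<partial>M)"
  using integrable_distr_eq[OF assms(1,4)] integrable_distr_eq[OF assms(2,4)]
    integral_distr[OF assms(1,4)] integral_distr[OF assms(2,4)] assms(3)
  by simp_all

lemma (in prob_space) indep_centered_sum_square:
  fixes X :: "'i \<Rightarrow> 'a \<Rightarrow> real"
  assumes I: "finite I" and indep: "indep_vars (\<lambda>_. borel) X I"
    and sq: "\<And>i. i \<in> I \<Longrightarrow> integrable M (\<lambda>\<omega>. (X i \<omega>)\<^sup>2)"
    and centered: "\<And>i. i \<in> I \<Longrightarrow> expectation (X i) = 0"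
  shows "integrable M (\<lambda>\<omega>. (\<Sum>i\<in>I. X i \<omega>)\<^sup>2)"
    and "expectation (\<lambda>\<omega>. (\<Sum>i\<in>I. X i \<omega>)\<^sup>2) = (\<Sum>i\<in>I. expectation (\<lambda>\<omega>. (X i \<omega>)\<^sup>2))"
proof -
  have int: "integrable M (X i)" if "i \<in> I" for i
  proof (rule square_integrable_imp_integrable)
    show "X i \<in> borel_measurable M"
      using indep that by (simp add: indep_vars_def)
  qed (rule sq[OF that])
  have cross: "integrable M (\<lambda>\<omega>. X i \<omega> * X j \<omega>)
      \<and> expectation (\<lambda>\<omega>. X i \<omega> * X j \<omega>) = (if i = j then expectation (\<lambda>\<omega>. (X i \<omega>)\<^sup>2) else 0)"
    if "i \<in> I" "j \<in> I" for i j
  proof (cases "i = j")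
    case True
    then show ?thesis
      using sq[OF that(1)] by (simp add: power2_eq_square)
  next
    case False
    have "indep_vars (\<lambda>_. borel) X {i, j}"
      using that by (intro indep_vars_subset[OF indep]) auto
    moreover have "\<And>k. k \<in> {i, j} \<Longrightarrow> integrable M (X k)"
      using that int by auto
    ultimately have "integrable M (\<lambda>\<omega>. \<Prod>k\<in>{i, j}. X k \<omega>)"
      "expectation (\<lambda>\<omega>. \<Prod>k\<in>{i, j}. X k \<omega>) = (\<Prod>k\<in>{i, j}. expectation (X k))"
      by (simp_all only: indep_vars_integrable indep_vars_lebesgue_integral finite.emptyI finite_insert)
    then show ?thesis
      using False that centered by simp
  qed
  have sum_sq: "(\<Sum>i\<in>I. X i \<omega>)\<^sup>2 = (\<Sum>i\<in>I. \<Sum>j\<in>I. X i \<omega> * X j \<omega>)" for \<omega>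
    by (simp add: power2_eq_square sum_product)
  show "integrable M (\<lambda>\<omega>. (\<Sum>i\<in>I. X i \<omega>)\<^sup>2)"
    unfolding sum_sq using cross by (intro Bochner_Integration.integrable_sum) auto
  have "expectation (\<lambda>\<omega>. (\<Sum>i\<in>I. X i \<omega>)\<^sup>2) = (\<Sum>i\<in>I. expectation (\<lambda>\<omega>. \<Sum>j\<in>I. X i \<omega> * X j \<omega>))"
    unfolding sum_sq using cross by (intro Bochner_Integration.integral_sum Bochner_Integration.integrable_sum) auto
  also have "\<dots> = (\<Sum>i\<in>I. \<Sum>j\<in>I. expectation (\<lambda>\<omega>. X i \<omega> * X j \<omega>))"
    using cross by (intro sum.cong refl Bochner_Integration.integral_sum) auto
  also have "\<dots> = (\<Sum>i\<in>I. \<Sum>j\<in>I. if i = j then expectation (\<lambda>\<omega>. (X i \<omega>)\<^sup>2) else 0)"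
    using cross by (intro sum.cong refl) auto
  also have "\<dots> = (\<Sum>i\<in>I. expectation (\<lambda>\<omega>. (X i \<omega>)\<^sup>2))"
    using I by simp
  finally show "expectation (\<lambda>\<omega>. (\<Sum>i\<in>I. X i \<omega>)\<^sup>2) = (\<Sum>i\<in>I. expectation (\<lambda>\<omega>. (X i \<omega>)\<^sup>2))" .
qed

lemma (in prob_space) iid_mean_deviation_le:
  fixes U :: "nat \<Rightarrow> 'a \<Rightarrow> 'b" and h :: "'b \<Rightarrow> real"
  assumes U: "\<And>i. U i \<in> measurable M N" and indep: "indep_vars (\<lambda>_. N) U UNIV"
    and distr: "\<And>i. distr M N (U i) = distr M N (U 0)"
    and h: "h \<in> borel_measurable N" and sq: "integrable M (\<lambda>\<omega>. (h (U 0 \<omega>))\<^sup>2)"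
    and "0 < \<epsilon>" "0 < n"
  shows "measure M {\<omega>\<in>space M. \<epsilon> \<le> \<bar>(\<Sum>i<n. h (U i \<omega>)) / n - expectation (\<lambda>\<omega>. h (U 0 \<omega>))\<bar>}
           \<le> variance (\<lambda>\<omega>. h (U 0 \<omega>)) / (n * \<epsilon>\<^sup>2)"
proof -
  define \<mu> where "\<mu> = expectation (\<lambda>\<omega>. h (U 0 \<omega>))"
  define X where "X i \<omega> = h (U i \<omega>) - \<mu>" for i \<omega>
  have hU[measurable]: "(\<lambda>\<omega>. h (U i \<omega>)) \<in> borel_measurable M" for i
    using measurable_compose[OF U h] by (simp add: comp_def)
  note same = integrable_integral_comp_eq_distr[OF U U distr]
  have sq_i: "integrable M (\<lambda>\<omega>. (h (U i \<omega>))\<^sup>2)" for i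
    using same(1)[of "\<lambda>x. (h x)\<^sup>2" i] h sq by simp
  have int_i: "integrable M (\<lambda>\<omega>. h (U i \<omega>))" for i
    by (rule square_integrable_imp_integrable[OF hU sq_i])
  have X_sq: "integrable M (\<lambda>\<omega>. (X i \<omega>)\<^sup>2)" for i
    unfolding X_def power2_diff using sq_i int_i
    by (intro Bochner_Integration.integrable_diff Bochner_Integration.integrable_add) auto
  have X_centered: "expectation (X i) = 0" for i
    unfolding X_def[abs_def] using int_i[of i] same(2)[OF h, of i]
    by (simp add: Bochner_Integration.integral_diff prob_space \<mu>_def)
  have X_var: "expectation (\<lambda>\<omega>. (X i \<omega>)\<^sup>2) = variance (\<lambda>\<omega>. h (U 0 \<omega>))" for i
    using same(2)[of "\<lambda>x. (h x - \<mu>)\<^sup>2" i] h by (simp add: X_def \<mu>_def)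
  have "indep_vars (\<lambda>_. borel) X UNIV"
    unfolding X_def by (rule indep_vars_compose2[OF indep]) (use h in measurable)
  then have sum_sq: "integrable M (\<lambda>\<omega>. (\<Sum>i<n. X i \<omega>)\<^sup>2)"
      "expectation (\<lambda>\<omega>. (\<Sum>i<n. X i \<omega>)\<^sup>2) = n * variance (\<lambda>\<omega>. h (U 0 \<omega>))"
    using indep_centered_sum_square[of "{..<n}" X] indep_vars_subset[of _ X UNIV "{..<n}"] X_sq X_centered X_var
    by auto
  have "\<epsilon> \<le> \<bar>(\<Sum>i<n. h (U i \<omega>)) / n - \<mu>\<bar> \<longleftrightarrow> (n * \<epsilon>)\<^sup>2 \<le> (\<Sum>i<n. X i \<omega>)\<^sup>2" for \<omega>
  proof -
    have "(\<Sum>i<n. h (U i \<omega>)) / n - \<mu> = (\<Sum>i<n. X i \<omega>) / n"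
      using \<open>0 < n\<close> by (simp add: X_def sum_subtractf field_simps)
    then have "\<epsilon> \<le> \<bar>(\<Sum>i<n. h (U i \<omega>)) / n - \<mu>\<bar> \<longleftrightarrow> \<bar>n * \<epsilon>\<bar> \<le> \<bar>\<Sum>i<n. X i \<omega>\<bar>"
      using \<open>0 < n\<close> \<open>0 < \<epsilon>\<close> by (simp add: abs_divide pos_le_divide_eq mult.commute)
    then show ?thesis
      by (simp add: abs_le_square_iff)
  qed
  then have "measure M {\<omega>\<in>space M. \<epsilon> \<le> \<bar>(\<Sum>i<n. h (U i \<omega>)) / n - \<mu>\<bar>}
      = measure M {\<omega>\<in>space M. (n * \<epsilon>)\<^sup>2 \<le> (\<Sum>i<n. X i \<omega>)\<^sup>2}"
    by simp
  also have "\<dots> \<le> expectation (\<lambda>\<omega>. (\<Sum>i<n. X i \<omega>)\<^sup>2) / (n * \<epsilon>)\<^sup>2"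
    using sum_sq(1) \<open>0 < \<epsilon>\<close> \<open>0 < n\<close>
    by (intro integral_Markov_inequality_measure[where A = "space M"]) auto
  also have "\<dots> = variance (\<lambda>\<omega>. h (U 0 \<omega>)) / (n * \<epsilon>\<^sup>2)"
    using \<open>0 < n\<close> unfolding sum_sq(2) by (simp add: power2_eq_square)
  finally show ?thesis
    unfolding \<mu>_def .
qed

theorem (in prob_space) weak_law_of_large_numbers:
  fixes U :: "nat \<Rightarrow> 'a \<Rightarrow> 'b" and h :: "'b \<Rightarrow> real"
  assumes U: "\<And>i. U i \<in> measurable M N" and indep: "indep_vars (\<lambda>_. N) U UNIV"
    and distr: "\<And>i. distr M N (U i) = distr M N (U 0)"
    and h: "h \<in> borel_measurable N" and sq: "integrable M (\<lambda>\<omega>. (h (U 0 \<omega>))\<^sup>2)"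
  shows "conv_prob M (\<lambda>n \<omega>. (\<Sum>i<n. h (U i \<omega>)) / n) (expectation (\<lambda>\<omega>. h (U 0 \<omega>)))"
  unfolding conv_prob_def
proof (intro allI impI)
  fix \<epsilon> :: real assume "0 < \<epsilon>"
  define A where "A n = {\<omega>\<in>space M. \<epsilon> \<le> \<bar>(\<Sum>i<n. h (U i \<omega>)) / n - expectation (\<lambda>\<omega>. h (U 0 \<omega>))\<bar>}"
    for n :: nat
  have "(\<lambda>\<omega>. h (U i \<omega>)) \<in> borel_measurable M" for i
    using measurable_compose[OF U h] by (simp add: comp_def)
  then have "A n \<in> sets M" for n
    unfolding A_def by measurable
  moreover have "(\<lambda>n. measure M (A n)) \<longlonglongrightarrow> 0"
  proof (rule tendsto_sandwich[OF _ _ tendsto_const])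
    show "(\<lambda>n. variance (\<lambda>\<omega>. h (U 0 \<omega>)) / (real n * \<epsilon>\<^sup>2)) \<longlonglongrightarrow> 0"
      using tendsto_mult[OF tendsto_const lim_inverse_n, of "variance (\<lambda>\<omega>. h (U 0 \<omega>)) / \<epsilon>\<^sup>2"]
      by (simp add: field_simps)
    show "\<forall>\<^sub>F n in sequentially. measure M (A n) \<le> variance (\<lambda>\<omega>. h (U 0 \<omega>)) / (real n * \<epsilon>\<^sup>2)"
      using eventually_gt_at_top[of 0] unfolding A_def
      by eventually_elim (rule iid_mean_deviation_le[OF U indep distr h sq \<open>0 < \<epsilon>\<close>])
  qed simp
  moreover have "{\<omega>\<in>space M. \<epsilon> < \<bar>(\<Sum>i<n. h (U i \<omega>)) / n - expectation (\<lambda>\<omega>. h (U 0 \<omega>))\<bar>} \<subseteq> A n" for n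
    unfolding A_def by auto
  ultimately show "\<exists>A. (\<forall>n. A n \<in> sets M
        \<and> {\<omega>\<in>space M. \<epsilon> < \<bar>(\<Sum>i<n. h (U i \<omega>)) / n - expectation (\<lambda>\<omega>. h (U 0 \<omega>))\<bar>} \<subseteq> A n)
      \<and> (\<lambda>n. measure M (A n)) \<longlonglongrightarrow> 0"
    by blast
qed

section \<open>Cell averages under i.i.d. sampling\<close>

definition cell_restrict ::
  "enat \<Rightarrow> bool \<Rightarrow> ((enat \<times> nat \<Rightarrow> real) \<Rightarrow> real) \<Rightarrow> enat \<times> bool \<times> (enat \<times> nat \<Rightarrow> real) \<Rightarrow> real" where
  "cell_restrict s q f x = (if fst x = s \<and> fst (snd x) = q then f (snd (snd x)) else 0)"

locale iid_units = prob_space M for M :: "'a measure" +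
  fixes T :: nat and SS :: "enat set"
    and Sv :: "nat \<Rightarrow> 'a \<Rightarrow> enat" and Qv :: "nat \<Rightarrow> 'a \<Rightarrow> bool"
    and Yp :: "nat \<Rightarrow> 'a \<Rightarrow> enat \<Rightarrow> nat \<Rightarrow> real"
  assumes measurable_units: "\<forall>i. unit_rv T SS Sv Qv Yp i \<in> measurable M (unit_space T SS)"
    and unit_rv_indep: "indep_vars (\<lambda>_. unit_space T SS) (unit_rv T SS Sv Qv Yp) UNIV"
    and identically_distributed: "\<forall>i. distr M (unit_space T SS) (unit_rv T SS Sv Qv Yp i)
                                    = distr M (unit_space T SS) (unit_rv T SS Sv Qv Yp 0)"
    and finite_second_moments: "\<forall>g\<in>insert \<infinity> SS. \<forall>t\<in>{1..T}. integrable M (\<lambda>\<omega>. (Yp 0 \<omega> g t)\<^sup>2)"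
begin

lemma unit_rv_measurable: "unit_rv T SS Sv Qv Yp i \<in> measurable M (unit_space T SS)"
  and unit_rv_distr: "distr M (unit_space T SS) (unit_rv T SS Sv Qv Yp i)
                        = distr M (unit_space T SS) (unit_rv T SS Sv Qv Yp 0)"
  using measurable_units identically_distributed by blast+

lemma outcome_square_integrable:
  "s \<in> insert \<infinity> SS \<Longrightarrow> t \<in> {1..T} \<Longrightarrow> integrable M (\<lambda>\<omega>. (Yp 0 \<omega> s t)\<^sup>2)"
  using finite_second_moments by blast

definition outcomes :: "nat \<Rightarrow> 'a \<Rightarrow> enat \<times> nat \<Rightarrow> real" where
  "outcomes i \<omega> = restrict (\<lambda>(s, t). Yp i \<omega> s t) (insert \<infinity> SS \<times> {1..T})"

definition cell_event :: "enat \<Rightarrow> bool \<Rightarrow> 'a set" where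
  "cell_event s q = {\<omega>\<in>space M. Sv 0 \<omega> = s \<and> Qv 0 \<omega> = q}"

lemma unit_rv_eq: "unit_rv T SS Sv Qv Yp i \<omega> = (Sv i \<omega>, Qv i \<omega>, outcomes i \<omega>)"
  by (simp add: unit_rv_def outcomes_def)

lemma Sv_measurable[measurable]: "Sv i \<in> measurable M (count_space UNIV)"
  and Qv_measurable[measurable]: "Qv i \<in> measurable M (count_space UNIV)"
  and outcomes_measurable[measurable]:
    "outcomes i \<in> measurable M (PiM (insert \<infinity> SS \<times> {1..T}) (\<lambda>_. borel))"
  using measurable_fst'' measurable_snd''[THEN measurable_fst''] measurable_snd''[THEN measurable_snd'']
  using unit_rv_measurable[of i] unfolding unit_space_def unit_rv_eq[abs_def]
  by (simp_all add: measurable_pair_iff comp_def)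

lemma cell_event_sets[measurable]: "cell_event s q \<in> sets M"
  unfolding cell_event_def by measurable

lemma Yp_measurable:
  assumes "s \<in> insert \<infinity> SS" "t \<in> {1..T}"
  shows "(\<lambda>\<omega>. Yp i \<omega> s t) \<in> borel_measurable M"
proof -
  have "(\<lambda>y. y (s, t)) \<in> measurable (PiM (insert \<infinity> SS \<times> {1..T}) (\<lambda>_. borel)) borel"
    using assms by (intro measurable_component_singleton) auto
  from measurable_compose[OF outcomes_measurable this] show ?thesis
    using assms by (simp add: outcomes_def)
qed

lemma Yp_integrable:
  assumes "s \<in> insert \<infinity> SS" "t \<in> {1..T}"
  shows "integrable M (\<lambda>\<omega>. Yp 0 \<omega> s t)"
  using Yp_measurable[OF assms] outcome_square_integrable[OF assms]
  by (rule square_integrable_imp_integrable)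

lemma Yobs_measurable:
  assumes "s \<in> SS" "u \<in> {1..T}"
  shows "(\<lambda>\<omega>. Yobs SS s q (Yp 0 \<omega>) u) \<in> borel_measurable M"
  using Yp_measurable[OF _ assms(2)] assms(1) by (simp add: Yobs_def)

lemma cell_average_conv_prob:
  assumes f: "f \<in> borel_measurable (PiM (insert \<infinity> SS \<times> {1..T}) (\<lambda>_. borel))"
    and sq: "integrable M (\<lambda>\<omega>. (f (outcomes 0 \<omega>))\<^sup>2)"
  shows "conv_prob M (\<lambda>n \<omega>. (\<Sum>i | i < n \<and> Sv i \<omega> = s \<and> Qv i \<omega> = q. f (outcomes i \<omega>)) / n)
           (\<integral>\<omega>. f (outcomes 0 \<omega>) * indicator (cell_event s q) \<omega> \<partial>M)"
proof -
  let ?h = "cell_restrict s q f" and ?U = "unit_rv T SS Sv Qv Yp"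
  have "?h \<in> borel_measurable (unit_space T SS)"
    unfolding cell_restrict_def unit_space_def using f by measurable
  moreover have "integrable M (\<lambda>\<omega>. (?h (?U 0 \<omega>))\<^sup>2)"
  proof -
    have "integrable M (\<lambda>\<omega>. (f (outcomes 0 \<omega>))\<^sup>2 * indicator (cell_event s q) \<omega>)"
      using sq by (intro integrable_real_mult_indicator) auto
    moreover have "integrable M (\<lambda>\<omega>. (f (outcomes 0 \<omega>))\<^sup>2 * indicator (cell_event s q) \<omega>)
        \<longleftrightarrow> integrable M (\<lambda>\<omega>. (?h (?U 0 \<omega>))\<^sup>2)"
      by (intro Bochner_Integration.integrable_cong) (auto simp: cell_restrict_def unit_rv_eq cell_event_def)
    ultimately show ?thesis
      by simp
  qed
  ultimately have "conv_prob M (\<lambda>n \<omega>. (\<Sum>i<n. ?h (?U i \<omega>)) / n) (expectation (\<lambda>\<omega>. ?h (?U 0 \<omega>)))"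
    by (rule weak_law_of_large_numbers[OF unit_rv_measurable unit_rv_indep unit_rv_distr])
  moreover have "(\<Sum>i<n. ?h (?U i \<omega>)) = (\<Sum>i | i < n \<and> Sv i \<omega> = s \<and> Qv i \<omega> = q. f (outcomes i \<omega>))" for n \<omega>
    by (simp add: cell_restrict_def unit_rv_eq sum.If_cases Collect_conj_eq lessThan_def Int_commute)
  moreover have "expectation (\<lambda>\<omega>. ?h (?U 0 \<omega>)) = (\<integral>\<omega>. f (outcomes 0 \<omega>) * indicator (cell_event s q) \<omega> \<partial>M)"
    by (intro Bochner_Integration.integral_cong) (auto simp: cell_restrict_def unit_rv_eq cell_event_def indicator_def)
  ultimately show ?thesis
    by simp
qed

lemma cell_freq_conv_prob:
  "conv_prob M (\<lambda>n \<omega>. cell_n n (\<lambda>i. Sv i \<omega>) (\<lambda>i. Qv i \<omega>) s q / n) (measure M (cell_event s q))"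
  using cell_average_conv_prob[of "\<lambda>_. 1" s q] by (simp add: cell_n_def)

lemma cell_increment_average_conv_prob:
  assumes \<sigma>: "\<sigma> \<in> insert \<infinity> SS" and t: "t \<in> {1..T}" "t0 \<in> {1..T}"
  shows "conv_prob M (\<lambda>n \<omega>. (\<Sum>i | i < n \<and> Sv i \<omega> = s \<and> Qv i \<omega> = q. Yp i \<omega> \<sigma> t - Yp i \<omega> \<sigma> t0) / n)
           (\<integral>\<omega>. (Yp 0 \<omega> \<sigma> t - Yp 0 \<omega> \<sigma> t0) * indicator (cell_event s q) \<omega> \<partial>M)"
proof -
  define f where "f y = y (\<sigma>, t) - y (\<sigma>, t0)" for y :: "enat \<times> nat \<Rightarrow> real"
  have f_outcomes: "f (outcomes i \<omega>) = Yp i \<omega> \<sigma> t - Yp i \<omega> \<sigma> t0" for i \<omega>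
    using \<sigma> t by (simp add: f_def outcomes_def)
  have "(\<lambda>y. y (\<sigma>, u)) \<in> borel_measurable (PiM (insert \<infinity> SS \<times> {1..T}) (\<lambda>_. borel))" if "u \<in> {1..T}" for u
    using \<sigma> that by (intro measurable_component_singleton) auto
  then have f_measurable: "f \<in> borel_measurable (PiM (insert \<infinity> SS \<times> {1..T}) (\<lambda>_. borel))"
    unfolding f_def using t by measurable
  have "integrable M (\<lambda>\<omega>. (f (outcomes 0 \<omega>))\<^sup>2)"
  proof (rule Bochner_Integration.integrable_bound)
    show "integrable M (\<lambda>\<omega>. 2 * (Yp 0 \<omega> \<sigma> t)\<^sup>2 + 2 * (Yp 0 \<omega> \<sigma> t0)\<^sup>2)"
      using outcome_square_integrable \<sigma> t by auto
    show "(\<lambda>\<omega>. (f (outcomes 0 \<omega>))\<^sup>2) \<in> borel_measurable M"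
      using f_measurable by measurable
    have "(a - b)\<^sup>2 \<le> 2 * a\<^sup>2 + 2 * b\<^sup>2" for a b :: real
      using zero_le_square[of "a + b"] by (simp add: power2_eq_square algebra_simps)
    then show "AE \<omega> in M. norm ((f (outcomes 0 \<omega>))\<^sup>2) \<le> norm (2 * (Yp 0 \<omega> \<sigma> t)\<^sup>2 + 2 * (Yp 0 \<omega> \<sigma> t0)\<^sup>2)"
      by (simp add: f_outcomes)
  qed
  from cell_average_conv_prob[OF f_measurable this] show ?thesis
    by (simp add: f_outcomes)
qed

definition observed :: "'a \<Rightarrow> nat \<Rightarrow> nat \<Rightarrow> real" where
  "observed \<omega> i t = Yobs SS (Sv i \<omega>) (Qv i \<omega>) (Yp i \<omega>) t"

lemma cell_mean_conv_prob:
  assumes cell: "0 < measure M (cell_event s q)" and t: "t \<in> {1..T}" "t0 \<in> {1..T}"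
  shows "conv_prob M (\<lambda>n \<omega>. cell_mean n (\<lambda>i. Sv i \<omega>) (\<lambda>i. Qv i \<omega>) (observed \<omega>) (Suc t0) s q t)
           (cond_exp_cell M Sv Qv (\<lambda>\<omega>. Yobs SS s q (Yp 0 \<omega>) t - Yobs SS s q (Yp 0 \<omega>) t0) s q)"
proof -
  \<comment> \<open>the potential outcome that is observed in cell \<open>(s, q)\<close>\<close>
  define \<sigma> where "\<sigma> = (if s \<noteq> \<infinity> \<and> s \<in> SS \<and> q then s else \<infinity>)"
  have \<sigma>: "\<sigma> \<in> insert \<infinity> SS"
    by (auto simp: \<sigma>_def)
  have Yobs_\<sigma>: "Yobs SS s q y u = y \<sigma> u" for y u
    by (simp add: Yobs_def \<sigma>_def)
  let ?sum = "\<lambda>n \<omega>. \<Sum>i | i < n \<and> Sv i \<omega> = s \<and> Qv i \<omega> = q. Yp i \<omega> \<sigma> t - Yp i \<omega> \<sigma> t0"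
  from conv_prob_divide[OF cell_increment_average_conv_prob[OF \<sigma> t] cell_freq_conv_prob] cell
  have "conv_prob M (\<lambda>n \<omega>. ?sum n \<omega> / n / (cell_n n (\<lambda>i. Sv i \<omega>) (\<lambda>i. Qv i \<omega>) s q / n))
      ((\<integral>\<omega>. (Yp 0 \<omega> \<sigma> t - Yp 0 \<omega> \<sigma> t0) * indicator (cell_event s q) \<omega> \<partial>M) / measure M (cell_event s q))"
    by simp
  moreover have "?sum n \<omega> / n / (cell_n n (\<lambda>i. Sv i \<omega>) (\<lambda>i. Qv i \<omega>) s q / n)
      = cell_mean n (\<lambda>i. Sv i \<omega>) (\<lambda>i. Qv i \<omega>) (observed \<omega>) (Suc t0) s q t" for n \<omega>
  proof -
    have "?sum n \<omega> = (\<Sum>i | i < n \<and> Sv i \<omega> = s \<and> Qv i \<omega> = q. dY (observed \<omega>) i t (Suc t0))"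
      by (intro sum.cong) (auto simp: dY_def observed_def Yobs_\<sigma>)
    then show ?thesis
      by (cases "n = 0") (simp_all add: cell_mean_def cell_n_def)
  qed
  moreover have "(\<integral>\<omega>. (Yp 0 \<omega> \<sigma> t - Yp 0 \<omega> \<sigma> t0) * indicator (cell_event s q) \<omega> \<partial>M) / measure M (cell_event s q)
      = cond_exp_cell M Sv Qv (\<lambda>\<omega>. Yobs SS s q (Yp 0 \<omega>) t - Yobs SS s q (Yp 0 \<omega>) t0) s q"
    by (simp add: cond_exp_cell_def cell_event_def Yobs_\<sigma>)
  ultimately show ?thesis
    by simp
qed

lemma cond_exp_cell_eq: "cond_exp_cell M Sv Qv X s q
    = (\<integral>\<omega>. X \<omega> * indicator (cell_event s q) \<omega> \<partial>M) / measure M (cell_event s q)"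
  by (simp add: cond_exp_cell_def cell_event_def)

lemma cond_exp_cell_diff:
  assumes "integrable M X" "integrable M Z"
  shows "cond_exp_cell M Sv Qv (\<lambda>\<omega>. X \<omega> - Z \<omega>) s q = cond_exp_cell M Sv Qv X s q - cond_exp_cell M Sv Qv Z s q"
  using assms
  by (simp add: cond_exp_cell_eq left_diff_distrib diff_divide_distrib integrable_real_mult_indicator
                Bochner_Integration.integral_diff)

lemma cond_exp_cell_add:
  assumes "integrable M X" "integrable M Z"
  shows "cond_exp_cell M Sv Qv (\<lambda>\<omega>. X \<omega> + Z \<omega>) s q = cond_exp_cell M Sv Qv X s q + cond_exp_cell M Sv Qv Z s q"
  using assms
  by (simp add: cond_exp_cell_eq distrib_right add_divide_distrib integrable_real_mult_indicator
                Bochner_Integration.integral_add)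

lemma cond_exp_cell_cong_AE:
  assumes "X \<in> borel_measurable M" "Z \<in> borel_measurable M" "AE \<omega> in M. X \<omega> = Z \<omega>"
  shows "cond_exp_cell M Sv Qv X s q = cond_exp_cell M Sv Qv Z s q"
  unfolding cond_exp_cell_eq using assms by (intro arg_cong2[where f = "(/)"] integral_cong_AE) auto

end

section \<open>Consistency under the DDD design assumptions\<close>

lemma V_stack_div_eq:
  "V_stack gc n S Q g / n
     = inverse (inverse (cell_n n S Q (enat g) True / n) + inverse (cell_n n S Q (enat g) False / n)
              + inverse (cell_n n S Q (gc g) True / n) + inverse (cell_n n S Q (gc g) False / n))"
proof -
  let ?c = "\<lambda>s q. real (cell_n n S Q s q)"
  have "inverse (?c (enat g) True / n) + inverse (?c (enat g) False / n) + inverse (?c (gc g) True / n)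
      + inverse (?c (gc g) False / n)
      = n * (1 / ?c (enat g) True + 1 / ?c (enat g) False + 1 / ?c (gc g) True + 1 / ?c (gc g) False)"
    by (simp add: algebra_simps)
  then show ?thesis
    by (simp add: V_stack_def inverse_mult_distrib divide_inverse mult.commute)
qed

lemma w_fwl_eq_scaled:
  "w_fwl T SS gc n S Q e g = (V_stack gc n S Q g / n) / (\<Sum>g'\<in>Gtrg_e T SS e. V_stack gc n S Q g' / n)"
  by (cases "n = 0") (simp_all add: w_fwl_def V_stack_def cell_n_def sum_divide_distrib[symmetric])

locale ddd_design = iid_units M T SS Sv Qv Yp for M :: "'a measure" and T SS Sv Qv Yp +
  fixes L K :: nat and gc :: "nat \<Rightarrow> enat"
  assumes SS_subset: "SS \<subseteq> enat ` {2..T} \<union> {\<infinity>}"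
    and gc_later: "\<forall>g\<in>Gtrg SS. gc g \<in> SS \<and> enat (g + K) < gc g"
    and no_anticipation_all: "\<forall>i. AE \<omega> in M. \<forall>g\<in>Gtrg SS. \<forall>t. t < g \<longrightarrow> Yp i \<omega> (enat g) t = Yp i \<omega> \<infinity> t"
    and ddd_parallel_trends: "\<forall>g\<in>Gtrg SS. \<forall>g'\<in>SS. \<forall>t. enat g < g' \<and> 2 \<le> t \<and> t \<le> T \<and> enat t \<le> g' \<longrightarrow>
        Delta_trend M Sv Qv Yp t (enat g) True - Delta_trend M Sv Qv Yp t (enat g) False
      = Delta_trend M Sv Qv Yp t g' True - Delta_trend M Sv Qv Yp t g' False"
    and admissibility: "\<forall>g\<in>Gtrg SS. \<forall>s\<in>{enat g, gc g}. \<forall>q.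
        0 < measure M {\<omega>\<in>space M. Sv 0 \<omega> = s \<and> Qv 0 \<omega> = q}"
begin

lemma gc: "g \<in> Gtrg SS \<Longrightarrow> gc g \<in> SS \<and> enat (g + K) < gc g"
  using gc_later by blast

lemma no_anticipation: "AE \<omega> in M. \<forall>g\<in>Gtrg SS. \<forall>t. t < g \<longrightarrow> Yp 0 \<omega> (enat g) t = Yp 0 \<omega> \<infinity> t"
  using no_anticipation_all by blast

lemma admissible: "g \<in> Gtrg SS \<Longrightarrow> s \<in> {enat g, gc g} \<Longrightarrow> 0 < measure M (cell_event s q)"
  using admissibility unfolding cell_event_def by blast

lemma Gtrg_subset: "Gtrg SS \<subseteq> {2..T}"
  using SS_subset unfolding Gtrg_def by auto

lemma finite_Gtrg: "finite (Gtrg SS)"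
  using Gtrg_subset by (rule finite_subset) simp

lemma finite_Gtrg_e: "finite (Gtrg_e T SS e)"
  using finite_Gtrg by (simp add: Gtrg_e_def)

lemma gc_neq: "g \<in> Gtrg SS \<Longrightarrow> gc g \<noteq> enat g"
  using gc by fastforce

definition V_lim :: "nat \<Rightarrow> real" where
  "V_lim g = inverse (1 / measure M (cell_event (enat g) True) + 1 / measure M (cell_event (enat g) False)
                    + 1 / measure M (cell_event (gc g) True) + 1 / measure M (cell_event (gc g) False))"

definition w_lim :: "int \<Rightarrow> nat \<Rightarrow> real" where
  "w_lim e g = V_lim g / (\<Sum>g'\<in>Gtrg_e T SS e. V_lim g')"

lemma V_lim_pos: "g \<in> Gtrg SS \<Longrightarrow> 0 < V_lim g"
  unfolding V_lim_def using admissible by (auto intro!: add_pos_pos)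

lemma w_lim_pos_sum_1:
  assumes "Gtrg_e T SS e \<noteq> {}"
  shows "\<forall>g\<in>Gtrg_e T SS e. 0 < w_lim e g" and "(\<Sum>g\<in>Gtrg_e T SS e. w_lim e g) = 1"
proof -
  have sub: "Gtrg_e T SS e \<subseteq> Gtrg SS"
    by (auto simp: Gtrg_e_def)
  have "0 < (\<Sum>g\<in>Gtrg_e T SS e. V_lim g)"
    using assms sub finite_Gtrg_e by (intro sum_pos) (auto intro: V_lim_pos)
  then show "\<forall>g\<in>Gtrg_e T SS e. 0 < w_lim e g" "(\<Sum>g\<in>Gtrg_e T SS e. w_lim e g) = 1"
    using sub V_lim_pos unfolding w_lim_def by (auto simp: sum_divide_distrib[symmetric])
qed

lemma V_stack_div_conv_prob:
  assumes "g \<in> Gtrg SS"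
  shows "conv_prob M (\<lambda>n \<omega>. V_stack gc n (\<lambda>i. Sv i \<omega>) (\<lambda>i. Qv i \<omega>) g / n) (V_lim g)"
proof -
  have inv: "conv_prob M (\<lambda>n \<omega>. inverse (cell_n n (\<lambda>i. Sv i \<omega>) (\<lambda>i. Qv i \<omega>) s q / n))
      (1 / measure M (cell_event s q))" if "s \<in> {enat g, gc g}" for s q
    using conv_prob_inverse[OF cell_freq_conv_prob[of s q]] admissible[OF assms that, of q]
    by (simp add: divide_inverse)
  have "0 < 1 / measure M (cell_event (enat g) True) + 1 / measure M (cell_event (enat g) False)
          + 1 / measure M (cell_event (gc g) True) + 1 / measure M (cell_event (gc g) False)"
    using admissible[OF assms] by (auto intro!: add_pos_pos)
  then show ?thesis
    unfolding V_stack_div_eq V_lim_def by (intro conv_prob_inverse conv_prob_add inv) auto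
qed

lemma w_fwl_conv_prob:
  assumes "g \<in> Gtrg_e T SS e"
  shows "conv_prob M (\<lambda>n \<omega>. w_fwl T SS gc n (\<lambda>i. Sv i \<omega>) (\<lambda>i. Qv i \<omega>) e g) (w_lim e g)"
proof -
  have sub: "Gtrg_e T SS e \<subseteq> Gtrg SS"
    by (auto simp: Gtrg_e_def)
  have "0 < (\<Sum>g'\<in>Gtrg_e T SS e. V_lim g')"
    using assms sub finite_Gtrg_e by (intro sum_pos) (auto intro: V_lim_pos)
  then show ?thesis
    unfolding w_fwl_eq_scaled w_lim_def using assms sub
    by (intro conv_prob_divide conv_prob_sum finite_Gtrg_e V_stack_div_conv_prob) auto
qed

definition cell_increment_lim :: "nat \<Rightarrow> nat \<Rightarrow> enat \<Rightarrow> bool \<Rightarrow> real" where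
  "cell_increment_lim g t s q =
     cond_exp_cell M Sv Qv (\<lambda>\<omega>. Yobs SS s q (Yp 0 \<omega>) t - Yobs SS s q (Yp 0 \<omega>) (g - 1)) s q"

definition ddd_lim :: "nat \<Rightarrow> nat \<Rightarrow> real" where
  "ddd_lim g t = (cell_increment_lim g t (enat g) True - cell_increment_lim g t (enat g) False)
               - (cell_increment_lim g t (gc g) True - cell_increment_lim g t (gc g) False)"

lemma tau_sat_conv_prob:
  assumes g: "g \<in> Gtrg SS" and t: "t \<in> {1..T}"
  shows "conv_prob M (\<lambda>n \<omega>. tau_sat gc n (\<lambda>i. Sv i \<omega>) (\<lambda>i. Qv i \<omega>) (observed \<omega>) g t) (ddd_lim g t)"
proof -
  have "g \<in> {2..T}"
    using g Gtrg_subset by blast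
  then have "g - 1 \<in> {1..T}" "Suc (g - 1) = g"
    by auto
  then have "conv_prob M (\<lambda>n \<omega>. cell_mean n (\<lambda>i. Sv i \<omega>) (\<lambda>i. Qv i \<omega>) (observed \<omega>) g s q t)
      (cell_increment_lim g t s q)" if "s \<in> {enat g, gc g}" for s q
    using cell_mean_conv_prob[OF admissible[OF g that] t, of "g - 1"] by (simp add: cell_increment_lim_def)
  then show ?thesis
    unfolding tau_sat_def ddd_lim_def by (intro conv_prob_diff) auto
qed

definition design_cells :: "(enat \<times> bool) set" where
  "design_cells = (\<Union>g\<in>Gtrg SS. {enat g, gc g}) \<times> UNIV"

definition shares_prod :: "nat \<Rightarrow> 'a \<Rightarrow> real" where
  "shares_prod n \<omega> = (\<Prod>x\<in>design_cells. cell_n n (\<lambda>i. Sv i \<omega>) (\<lambda>i. Qv i \<omega>) (fst x) (snd x) / n)"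

lemma finite_design_cells: "finite design_cells"
  unfolding design_cells_def using finite_Gtrg by auto

lemma shares_prod_conv_prob:
  "conv_prob M shares_prod (\<Prod>x\<in>design_cells. measure M (cell_event (fst x) (snd x)))"
  unfolding shares_prod_def[abs_def]
  by (rule conv_prob_prod[OF finite_design_cells cell_freq_conv_prob])

lemma shares_prod_lim_pos: "0 < (\<Prod>x\<in>design_cells. measure M (cell_event (fst x) (snd x)))"
  unfolding design_cells_def using admissible by (intro prod_pos) auto

lemma ols_tau_eq_fwl_sum_if_shares_pos:
  assumes e: "e \<in> event_times L K" "Gtrg_e T SS e \<noteq> {}" and pos: "0 < shares_prod n \<omega>"
  shows "ols_tau T L K SS gc n (\<lambda>i. Sv i \<omega>) (\<lambda>i. Qv i \<omega>) (observed \<omega>) e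
      = (\<Sum>g\<in>Gtrg_e T SS e. w_fwl T SS gc n (\<lambda>i. Sv i \<omega>) (\<lambda>i. Qv i \<omega>) e g
          * tau_sat gc n (\<lambda>i. Sv i \<omega>) (\<lambda>i. Qv i \<omega>) (observed \<omega>) g (nat (int g + e)))"
proof -
  have "\<forall>g\<in>Gtrg SS. \<forall>s\<in>{enat g, gc g}. \<forall>q. 0 < cell_n n (\<lambda>i. Sv i \<omega>) (\<lambda>i. Qv i \<omega>) s q"
  proof (intro ballI allI)
    fix g s q assume "g \<in> Gtrg SS" "s \<in> {enat g, gc g}"
    then have sq: "(s, q) \<in> design_cells"
      by (auto simp: design_cells_def)
    have "cell_n n (\<lambda>i. Sv i \<omega>) (\<lambda>i. Qv i \<omega>) s q / n \<noteq> 0"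
    proof
      assume "cell_n n (\<lambda>i. Sv i \<omega>) (\<lambda>i. Qv i \<omega>) s q / n = 0"
      then have "shares_prod n \<omega> = 0"
        unfolding shares_prod_def using finite_design_cells sq by (intro prod_zero) force+
      then show False
        using pos by simp
    qed
    then show "0 < cell_n n (\<lambda>i. Sv i \<omega>) (\<lambda>i. Qv i \<omega>) s q"
      by simp
  qed
  then interpret stacked_regression T L K SS gc n "\<lambda>i. Sv i \<omega>" "\<lambda>i. Qv i \<omega>" "observed \<omega>"
    using finite_Gtrg gc_neq by unfold_locales auto
  show ?thesis
    by (rule ols_tau_eq_fwl_sum[OF e])
qed

text \<open>
  The OLS coefficient has the FWL form as soon as every stack cell is nonempty, which happens on
  the event that the product of all cell shares is positive; that product converges to a positive
  constant.\<close>

lemma ols_tau_conv_prob: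
  assumes e: "e \<in> event_times L K" "Gtrg_e T SS e \<noteq> {}"
  shows "conv_prob M (\<lambda>n \<omega>. ols_tau T L K SS gc n (\<lambda>i. Sv i \<omega>) (\<lambda>i. Qv i \<omega>) (observed \<omega>) e)
           (\<Sum>g\<in>Gtrg_e T SS e. w_lim e g * ddd_lim g (nat (int g + e)))"
proof (rule conv_prob_eq_where_pos[OF _ shares_prod_conv_prob shares_prod_lim_pos])
  show "conv_prob M (\<lambda>n \<omega>. \<Sum>g\<in>Gtrg_e T SS e. w_fwl T SS gc n (\<lambda>i. Sv i \<omega>) (\<lambda>i. Qv i \<omega>) e g
        * tau_sat gc n (\<lambda>i. Sv i \<omega>) (\<lambda>i. Qv i \<omega>) (observed \<omega>) g (nat (int g + e)))
      (\<Sum>g\<in>Gtrg_e T SS e. w_lim e g * ddd_lim g (nat (int g + e)))"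
    by (intro conv_prob_sum finite_Gtrg_e conv_prob_mult w_fwl_conv_prob tau_sat_conv_prob)
       (auto simp: Gtrg_e_def)
qed (rule ols_tau_eq_fwl_sum_if_shares_pos[OF e])

definition untreated_level :: "nat \<Rightarrow> enat \<Rightarrow> bool \<Rightarrow> real" where
  "untreated_level u s q = cond_exp_cell M Sv Qv (\<lambda>\<omega>. Yp 0 \<omega> \<infinity> u) s q"

definition ddd_level :: "nat \<Rightarrow> nat \<Rightarrow> real" where
  "ddd_level g u = untreated_level u (enat g) True - untreated_level u (enat g) False
                 - untreated_level u (gc g) True + untreated_level u (gc g) False"

lemma cond_exp_cell_untreated_diff:
  assumes "u \<in> {1..T}" "u' \<in> {1..T}"
  shows "cond_exp_cell M Sv Qv (\<lambda>\<omega>. Yp 0 \<omega> \<infinity> u - Yp 0 \<omega> \<infinity> u') s q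
       = untreated_level u s q - untreated_level u' s q"
  unfolding untreated_level_def using assms by (intro cond_exp_cell_diff Yp_integrable) auto

lemma ddd_level_step:
  assumes g: "g \<in> Gtrg SS" and u: "2 \<le> u" "u \<le> T" "u \<le> g + K"
  shows "ddd_level g u = ddd_level g (u - 1)"
proof -
  have trend: "Delta_trend M Sv Qv Yp u s q = untreated_level u s q - untreated_level (u - 1) s q" for s q
    unfolding Delta_trend_def using u by (intro cond_exp_cell_untreated_diff) auto
  obtain gc_SS: "gc g \<in> SS" and gc_late: "enat (g + K) < gc g"
    using gc[OF g] by blast
  have "enat g < gc g" "enat u \<le> gc g"
    using u gc_late by (auto intro: le_less_trans[OF _ gc_late] less_imp_le[OF le_less_trans[OF _ gc_late]])
  then have "Delta_trend M Sv Qv Yp u (enat g) True - Delta_trend M Sv Qv Yp u (enat g) False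
      = Delta_trend M Sv Qv Yp u (gc g) True - Delta_trend M Sv Qv Yp u (gc g) False"
    using ddd_parallel_trends g gc_SS u by blast
  then show ?thesis
    unfolding ddd_level_def trend by simp
qed

lemma ddd_level_eq_1:
  assumes "g \<in> Gtrg SS" "1 \<le> u" "u \<le> T" "u \<le> g + K"
  shows "ddd_level g u = ddd_level g 1"
  using assms(2-)
proof (induction u)
  case (Suc u)
  then show ?case
  proof (cases "u = 0")
    case False
    then have "ddd_level g (Suc u) = ddd_level g u"
      using ddd_level_step[OF assms(1), of "Suc u"] Suc.prems by simp
    also have "\<dots> = ddd_level g 1"
      using Suc False by simp
    finally show ?thesis .
  qed simp
qed simp

lemma cell_increment_lim_untreated:
  assumes g: "g \<in> Gtrg SS" and t: "t \<in> {1..T}" "t \<le> g + K"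
    and cell: "(s, q) \<in> {(enat g, False), (gc g, True), (gc g, False)}"
  shows "cell_increment_lim g t s q = untreated_level t s q - untreated_level (g - 1) s q"
proof -
  have g1: "g - 1 \<in> {1..T}"
    using g Gtrg_subset by force
  have s: "s \<in> SS"
    using cell g gc[OF g] by (auto simp: Gtrg_def)
  have "AE \<omega> in M. Yobs SS s q (Yp 0 \<omega>) t - Yobs SS s q (Yp 0 \<omega>) (g - 1) = Yp 0 \<omega> \<infinity> t - Yp 0 \<omega> \<infinity> (g - 1)"
    using no_anticipation
  proof eventually_elim
    case (elim \<omega>)
    show ?case
    proof (cases "s \<noteq> \<infinity> \<and> q \<and> s \<noteq> enat g")
      case True
      \<comment> \<open>the only such cell is the eligible comparison cohort, enabled only after the window\<close>
      then obtain g' where g': "s = enat g'" "g' \<in> Gtrg SS" "g + K < g'"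
        using cell s gc[OF g] by (auto simp: Gtrg_def)
      then have "t < g'" "g - 1 < g'"
        using t by auto
      then show ?thesis
        using elim g' by (simp add: Yobs_def)
    qed (use cell gc_neq[OF g] in \<open>auto simp: Yobs_def\<close>)
  qed
  then have "cell_increment_lim g t s q
      = cond_exp_cell M Sv Qv (\<lambda>\<omega>. Yp 0 \<omega> \<infinity> t - Yp 0 \<omega> \<infinity> (g - 1)) s q"
    unfolding cell_increment_lim_def using s t g1
    by (intro cond_exp_cell_cong_AE) (auto intro!: borel_measurable_diff Yobs_measurable Yp_measurable)
  then show ?thesis
    using cond_exp_cell_untreated_diff[OF t(1) g1] by simp
qed

lemma cell_increment_lim_treated:
  assumes g: "g \<in> Gtrg SS" and t: "nat (int g + e) \<in> {1..T}"
  shows "cell_increment_lim g (nat (int g + e)) (enat g) True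
       = CATT M Sv Qv Yp g e + (untreated_level (nat (int g + e)) (enat g) True - untreated_level (g - 1) (enat g) True)"
proof -
  let ?t = "nat (int g + e)"
  have g1: "g - 1 \<in> {1..T}"
    using g Gtrg_subset by force
  have s: "enat g \<in> SS"
    using g by (simp add: Gtrg_def)
  have "AE \<omega> in M. Yobs SS (enat g) True (Yp 0 \<omega>) ?t - Yobs SS (enat g) True (Yp 0 \<omega>) (g - 1)
      = (Yp 0 \<omega> (enat g) ?t - Yp 0 \<omega> \<infinity> ?t) + (Yp 0 \<omega> \<infinity> ?t - Yp 0 \<omega> \<infinity> (g - 1))"
    using no_anticipation
  proof eventually_elim
    case (elim \<omega>)
    then have "Yp 0 \<omega> (enat g) (g - 1) = Yp 0 \<omega> \<infinity> (g - 1)"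
      using g g1 by auto
    then show ?case
      using s by (simp add: Yobs_def)
  qed
  then have "cell_increment_lim g ?t (enat g) True
      = cond_exp_cell M Sv Qv (\<lambda>\<omega>. (Yp 0 \<omega> (enat g) ?t - Yp 0 \<omega> \<infinity> ?t) + (Yp 0 \<omega> \<infinity> ?t - Yp 0 \<omega> \<infinity> (g - 1))) (enat g) True"
    unfolding cell_increment_lim_def using s t g1
    by (intro cond_exp_cell_cong_AE) (auto intro!: borel_measurable_diff borel_measurable_add Yobs_measurable Yp_measurable)
  also have "\<dots> = CATT M Sv Qv Yp g e + (untreated_level ?t (enat g) True - untreated_level (g - 1) (enat g) True)"
    unfolding CATT_def cond_exp_cell_untreated_diff[OF t g1, symmetric] using s t g1
    by (intro cond_exp_cell_add Bochner_Integration.integrable_diff Yp_integrable) auto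
  finally show ?thesis .
qed

theorem ddd_lim_eq_CATT:
  assumes g: "g \<in> Gtrg_e T SS e" and e: "e \<in> event_times L K"
  shows "ddd_lim g (nat (int g + e)) = CATT M Sv Qv Yp g e"
proof -
  let ?t = "nat (int g + e)"
  have gG: "g \<in> Gtrg SS" and t: "?t \<in> {1..T}" "?t \<le> g + K"
    using g e by (auto simp: Gtrg_e_def event_times_def)
  have "2 \<le> g" "g \<le> T"
    using gG Gtrg_subset by auto
  then have "ddd_level g ?t = ddd_level g (g - 1)"
    using ddd_level_eq_1[OF gG, of ?t] ddd_level_eq_1[OF gG, of "g - 1"] t by simp
  then show ?thesis
    unfolding ddd_lim_def cell_increment_lim_treated[OF gG t(1)]
    using cell_increment_lim_untreated[OF gG t] by (simp add: ddd_level_def)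
qed

theorem ddd_consistency:
  "\<forall>e\<in>event_times L K. Gtrg_e T SS e \<noteq> {} \<longrightarrow>
     (\<exists>wstar :: nat \<Rightarrow> real.
        (\<forall>g\<in>Gtrg_e T SS e. 0 < wstar g)
      \<and> (\<Sum>g\<in>Gtrg_e T SS e. wstar g) = 1
      \<and> (\<forall>g\<in>Gtrg_e T SS e.
           conv_prob M (\<lambda>n \<omega>. w_fwl T SS gc n (\<lambda>i. Sv i \<omega>) (\<lambda>i. Qv i \<omega>) e g) (wstar g))
      \<and> conv_prob M
          (\<lambda>n \<omega>. ols_tau T L K SS gc n (\<lambda>i. Sv i \<omega>) (\<lambda>i. Qv i \<omega>)
                    (\<lambda>i t. Yobs SS (Sv i \<omega>) (Qv i \<omega>) (Yp i \<omega>) t) e)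
          (\<Sum>g\<in>Gtrg_e T SS e. wstar g * CATT M Sv Qv Yp g e))"
proof (intro ballI impI)
  fix e assume e: "e \<in> event_times L K" "Gtrg_e T SS e \<noteq> {}"
  have "(\<Sum>g\<in>Gtrg_e T SS e. w_lim e g * ddd_lim g (nat (int g + e)))
      = (\<Sum>g\<in>Gtrg_e T SS e. w_lim e g * CATT M Sv Qv Yp g e)"
    using ddd_lim_eq_CATT[OF _ e(1)] by simp
  then show "\<exists>wstar. (\<forall>g\<in>Gtrg_e T SS e. 0 < wstar g) \<and> (\<Sum>g\<in>Gtrg_e T SS e. wstar g) = 1
      \<and> (\<forall>g\<in>Gtrg_e T SS e. conv_prob M (\<lambda>n \<omega>. w_fwl T SS gc n (\<lambda>i. Sv i \<omega>) (\<lambda>i. Qv i \<omega>) e g) (wstar g))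
      \<and> conv_prob M (\<lambda>n \<omega>. ols_tau T L K SS gc n (\<lambda>i. Sv i \<omega>) (\<lambda>i. Qv i \<omega>)
                             (\<lambda>i t. Yobs SS (Sv i \<omega>) (Qv i \<omega>) (Yp i \<omega>) t) e)
          (\<Sum>g\<in>Gtrg_e T SS e. wstar g * CATT M Sv Qv Yp g e)"
    using w_lim_pos_sum_1[OF e(2)] w_fwl_conv_prob ols_tau_conv_prob[OF e]
    by (intro exI[of _ "w_lim e"]) (simp add: observed_def[abs_def])
qed

end


theorem mainTheorem6:
  fixes T L K :: nat and SS :: "enat set" and gc :: "nat \<Rightarrow> enat"
  assumes L1: "1 \<le> L"
    and SSsub: "SS \<subseteq> enat ` {2..T} \<union> {\<infinity>}"
    and gc: "\<forall>g\<in>Gtrg SS. gc g \<in> SS \<and> enat (g + K) < gc g"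
  shows
   "(\<forall>(n::nat) (S::nat \<Rightarrow> enat) (Q::nat \<Rightarrow> bool) (Y::nat \<Rightarrow> nat \<Rightarrow> real) e.
       (\<forall>i<n. S i \<in> SS) \<longrightarrow>
       (\<forall>g\<in>Gtrg SS. \<forall>s\<in>{enat g, gc g}. \<forall>q. 0 < cell_n n S Q s q) \<longrightarrow>
       e \<in> event_times L K \<longrightarrow> Gtrg_e T SS e \<noteq> {} \<longrightarrow>
         (\<exists>p. is_ols T L K SS gc n S Q Y p)
       \<and> (\<forall>lam eta tau. is_ols T L K SS gc n S Q Y (lam, eta, tau) \<longrightarrow>
            tau e = (\<Sum>g\<in>Gtrg_e T SS e.
                        w_fwl T SS gc n S Q e g * tau_sat gc n S Q Y g (nat (int g + e))))
       \<and> (\<forall>g\<in>Gtrg_e T SS e. 0 < w_fwl T SS gc n S Q e g)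
       \<and> (\<Sum>g\<in>Gtrg_e T SS e. w_fwl T SS gc n S Q e g) = 1)
  \<and> (\<forall>(M::'a measure) (Sv::nat \<Rightarrow> 'a \<Rightarrow> enat) (Qv::nat \<Rightarrow> 'a \<Rightarrow> bool)
        (Yp::nat \<Rightarrow> 'a \<Rightarrow> enat \<Rightarrow> nat \<Rightarrow> real).
       \<comment> \<open>i.i.d. sampling of units\<close>
       prob_space M \<longrightarrow>
       (\<forall>i. unit_rv T SS Sv Qv Yp i \<in> measurable M (unit_space T SS)) \<longrightarrow>
       prob_space.indep_vars M (\<lambda>_. unit_space T SS) (unit_rv T SS Sv Qv Yp) UNIV \<longrightarrow>
       (\<forall>i. distr M (unit_space T SS) (unit_rv T SS Sv Qv Yp i)
              = distr M (unit_space T SS) (unit_rv T SS Sv Qv Yp 0)) \<longrightarrow>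
       (\<forall>i. AE \<omega> in M. Sv i \<omega> \<in> SS) \<longrightarrow>
       \<comment> \<open>finite second moments\<close>
       (\<forall>g\<in>insert \<infinity> SS. \<forall>t\<in>{1..T}. integrable M (\<lambda>\<omega>. (Yp 0 \<omega> g t)\<^sup>2)) \<longrightarrow>
       \<comment> \<open>overlap\<close>
       (\<forall>s\<in>SS. \<forall>q. 0 < measure M {\<omega>\<in>space M. Sv 0 \<omega> = s \<and> Qv 0 \<omega> = q}) \<longrightarrow>
       \<comment> \<open>no anticipation\<close>
       (\<forall>i. AE \<omega> in M. \<forall>g\<in>Gtrg SS. \<forall>t. t < g \<longrightarrow> Yp i \<omega> (enat g) t = Yp i \<omega> \<infinity> t) \<longrightarrow>
       \<comment> \<open>DDD parallel trends\<close>
       (\<forall>g\<in>Gtrg SS. \<forall>g'\<in>SS. \<forall>t. enat g < g' \<and> 2 \<le> t \<and> t \<le> T \<and> enat t \<le> g' \<longrightarrow>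
           Delta_trend M Sv Qv Yp t (enat g) True - Delta_trend M Sv Qv Yp t (enat g) False
         = Delta_trend M Sv Qv Yp t g' True - Delta_trend M Sv Qv Yp t g' False) \<longrightarrow>
       \<comment> \<open>admissibility\<close>
       (\<forall>g\<in>Gtrg SS. \<forall>s\<in>{enat g, gc g}. \<forall>q.
           0 < measure M {\<omega>\<in>space M. Sv 0 \<omega> = s \<and> Qv 0 \<omega> = q}) \<longrightarrow>
       \<comment> \<open>non-vanishing shares\<close>
       (\<forall>g\<in>Gtrg SS.
          (\<exists>c>0. conv_prob M (\<lambda>n \<omega>. real (stack_n gc n (\<lambda>i. Sv i \<omega>) (\<lambda>i. Qv i \<omega>) g) / real n) c)
        \<and> (\<forall>s\<in>{enat g, gc g}. \<forall>q. \<exists>c>0.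
             conv_prob M (\<lambda>n \<omega>. real (cell_n n (\<lambda>i. Sv i \<omega>) (\<lambda>i. Qv i \<omega>) s q)
                                 / real (stack_n gc n (\<lambda>i. Sv i \<omega>) (\<lambda>i. Qv i \<omega>) g)) c)) \<longrightarrow>
       (\<forall>e\<in>event_times L K. Gtrg_e T SS e \<noteq> {} \<longrightarrow>
          (\<exists>wstar :: nat \<Rightarrow> real.
              (\<forall>g\<in>Gtrg_e T SS e. 0 < wstar g)
            \<and> (\<Sum>g\<in>Gtrg_e T SS e. wstar g) = 1
            \<and> (\<forall>g\<in>Gtrg_e T SS e.
                 conv_prob M (\<lambda>n \<omega>. w_fwl T SS gc n (\<lambda>i. Sv i \<omega>) (\<lambda>i. Qv i \<omega>) e g) (wstar g))
            \<and> conv_prob M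
                (\<lambda>n \<omega>. ols_tau T L K SS gc n (\<lambda>i. Sv i \<omega>) (\<lambda>i. Qv i \<omega>)
                          (\<lambda>i t. Yobs SS (Sv i \<omega>) (Qv i \<omega>) (Yp i \<omega>) t) e)
                (\<Sum>g\<in>Gtrg_e T SS e. wstar g * CATT M Sv Qv Yp g e))))"
proof -
  have finite_Gtrg: "finite (Gtrg SS)"
    using SSsub unfolding Gtrg_def by (auto intro: finite_subset[of _ "{2..T}"])
  have gc_neq: "\<And>g. g \<in> Gtrg SS \<Longrightarrow> gc g \<noteq> enat g"
    using gc by fastforce
  show ?thesis (is "?fixed_sample \<and> ?large_sample")
  proof
    show ?fixed_sample
      using stacked_regression.ols_fwl_decomposition[OF stacked_regression.intro[OF finite_Gtrg gc_neq]] by blast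
    show ?large_sample
      using SSsub gc
      by (intro allI impI, intro ddd_design.ddd_consistency ddd_design.intro iid_units.intro
          iid_units_axioms.intro ddd_design_axioms.intro) assumption+
  qed
qed

end
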